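(* Let $X$ be a sequentially complete Hausdorff locally convex vector space and let $x(\cdot):[a,b]\to X$ have weakly compact semivariation on $[a,b]$. Then for every continuous $g:[a,b]\to\mathbb{C}$ the integral $\int_a^b g(t)\,dx(t)$ exists in $X$.
   Context: For $a\le b$ let $E(a,b)=\{\sum_{i=1}^n[x(t_{2i})-x(t_{2i-1})] : n\ge1,\ a\le t_1<t_2<\dots<t_{2n}\le b\}$. The function $x(\cdot)$ has weakly compact semivariation on $[a,b]$ if $E(a,b)$ is relatively weakly compact in $X$ (weak topology $\sigma(X,X')$, $X'$ the topological dual). The integral $\int_a^b g\,dx$ is the limit in the topology of $X$, as the mesh $d=\max_i|t_i-t_{i-1}|\to0$, of the Riemann–Stieltjes sums $\sum_{i=1}^n g(s_i)[x(t_i)-x(t_{i-1})]$ over tagged divisions $a=t_0\le\dots\le t_n=b$, $s_i\in[t_{i-1},t_i]$. *)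

theory Defs
  imports "HOL-Analysis.Analysis"
begin

text \<open>A complex topological vector space is modelled by a type 'x carrying the
(Hausdorff) topology of the type class, an additive group structure, and a
complex scalar multiplication sm making it a complex vector space
(locale Vector_Spaces.vector_space), such that addition and scalar
multiplication are jointly continuous.\<close>

definition complex_tvs :: "(complex \<Rightarrow> 'x::{ab_group_add,topological_space} \<Rightarrow> 'x) \<Rightarrow> bool" where
  "complex_tvs sm \<longleftrightarrow>
     Vector_Spaces.vector_space sm \<and>
     continuous_on UNIV (\<lambda>p::'x \<times> 'x. fst p + snd p) \<and>
     continuous_on UNIV (\<lambda>p::complex \<times> 'x. sm (fst p) (snd p))"

definition cconvex :: "(complex \<Rightarrow> 'x::ab_group_add \<Rightarrow> 'x) \<Rightarrow> 'x set \<Rightarrow> bool" where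
  "cconvex sm C \<longleftrightarrow>
     (\<forall>x\<in>C. \<forall>y\<in>C. \<forall>u::real. 0 \<le> u \<and> u \<le> 1 \<longrightarrow>
        sm (complex_of_real u) x + sm (complex_of_real (1 - u)) y \<in> C)"

definition locally_convex :: "(complex \<Rightarrow> 'x::{ab_group_add,topological_space} \<Rightarrow> 'x) \<Rightarrow> bool" where
  "locally_convex sm \<longleftrightarrow>
     (\<forall>U. open U \<and> 0 \<in> U \<longrightarrow> (\<exists>V. open V \<and> 0 \<in> V \<and> V \<subseteq> U \<and> cconvex sm V))"

definition tvs_cauchy :: "(nat \<Rightarrow> 'x::{ab_group_add,topological_space}) \<Rightarrow> bool" where
  "tvs_cauchy u \<longleftrightarrow>
     (\<forall>U. open U \<and> 0 \<in> U \<longrightarrow> (\<exists>N. \<forall>m\<ge>N. \<forall>n\<ge>N. u m - u n \<in> U))"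

definition seq_complete_tvs :: "'x::{ab_group_add,topological_space} itself \<Rightarrow> bool" where
  "seq_complete_tvs _ \<longleftrightarrow> (\<forall>u::nat \<Rightarrow> 'x. tvs_cauchy u \<longrightarrow> (\<exists>l. u \<longlonglongrightarrow> l))"

definition topdual :: "(complex \<Rightarrow> 'x::{ab_group_add,topological_space} \<Rightarrow> 'x) \<Rightarrow> ('x \<Rightarrow> complex) set" where
  "topdual sm = {f. Vector_Spaces.linear sm (*) f \<and> continuous_on UNIV f}"

definition weak_topology :: "(complex \<Rightarrow> 'x::{ab_group_add,topological_space} \<Rightarrow> 'x) \<Rightarrow> 'x topology" where
  "weak_topology sm = topology_generated_by {f -` V | f V. f \<in> topdual sm \<and> open V}"

definition Eset :: "(real \<Rightarrow> 'x::ab_group_add) \<Rightarrow> real \<Rightarrow> real \<Rightarrow> 'x set" where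
  "Eset x a b = {(\<Sum>i\<in>{1..n}. x (t (2*i)) - x (t (2*i - 1))) | n t.
       n \<ge> 1 \<and> a \<le> t 1 \<and> (\<forall>i\<in>{1..<2*n}. t i < t (Suc i)) \<and> t (2*n) \<le> b}"

definition weakly_compact_semivariation ::
  "(complex \<Rightarrow> 'x::{ab_group_add,topological_space} \<Rightarrow> 'x) \<Rightarrow> (real \<Rightarrow> 'x) \<Rightarrow> real \<Rightarrow> real \<Rightarrow> bool" where
  "weakly_compact_semivariation sm x a b \<longleftrightarrow>
     compactin (weak_topology sm) ((weak_topology sm) closure_of (Eset x a b))"

text \<open>Tagged division a = t 0 \<le> ... \<le> t n = b with tags s i \<in> [t i, t (i+1)], i < n
  (index shifted by one relative to the paper), and its mesh bound.\<close>
definition tagged_div :: "real \<Rightarrow> real \<Rightarrow> nat \<Rightarrow> (nat \<Rightarrow> real) \<Rightarrow> (nat \<Rightarrow> real) \<Rightarrow> bool" where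
  "tagged_div a b n t s \<longleftrightarrow> t 0 = a \<and> t n = b \<and>
     (\<forall>i<n. t i \<le> t (Suc i) \<and> t i \<le> s i \<and> s i \<le> t (Suc i))"

definition mesh :: "nat \<Rightarrow> (nat \<Rightarrow> real) \<Rightarrow> real" where
  "mesh n t = Max (insert 0 {\<bar>t (Suc i) - t i\<bar> | i. i < n})"

definition RS_sum :: "(complex \<Rightarrow> 'x::ab_group_add \<Rightarrow> 'x) \<Rightarrow> (real \<Rightarrow> complex) \<Rightarrow> (real \<Rightarrow> 'x)
     \<Rightarrow> nat \<Rightarrow> (nat \<Rightarrow> real) \<Rightarrow> (nat \<Rightarrow> real) \<Rightarrow> 'x" where
  "RS_sum sm g x n t s = (\<Sum>i<n. sm (g (s i)) (x (t (Suc i)) - x (t i)))"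

definition has_RS_integral ::
  "(complex \<Rightarrow> 'x::{ab_group_add,topological_space} \<Rightarrow> 'x) \<Rightarrow> (real \<Rightarrow> complex) \<Rightarrow> (real \<Rightarrow> 'x)
     \<Rightarrow> real \<Rightarrow> real \<Rightarrow> 'x \<Rightarrow> bool" where
  "has_RS_integral sm g x a b I \<longleftrightarrow>
     (\<forall>U. open U \<and> I \<in> U \<longrightarrow>
        (\<exists>\<delta>>0. \<forall>n t s. tagged_div a b n t s \<and> mesh n t < \<delta> \<longrightarrow> RS_sum sm g x n t s \<in> U))"

end

theory Submission
  imports Defs
begin

text \<open>
  Fix a continuous seminorm p (the Minkowski functional of a convex, rotation-invariant
  neighbourhood of 0). Weak compactness of the closure of E(a,b) makes every continuous
  functional bounded on E(a,b); a gliding-hump argument with Hahn--Banach norming functionals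
  upgrades this to a bound p(e) \<le> K on E(a,b). For two tagged divisions, the difference of their
  Riemann--Stieltjes sums is a combination of increments of x over the cells of the common
  refinement with coefficients g(s) - g(s') that are small by uniform continuity of g; testing
  against a norming functional and splitting the cells by sign bounds its p-size by 4 \<epsilon> K.
  Hence the sums are Cauchy as the mesh tends to 0, and sequential completeness provides the
  integral as the limit along uniform divisions.
\<close>

section \<open>The Hahn--Banach theorem for seminorms\<close>

locale real_seminorm = vector_space sc for sc :: "real \<Rightarrow> 'x::ab_group_add \<Rightarrow> 'x" +
  fixes p :: "'x \<Rightarrow> real"
  assumes p_triangle: "p (x + y) \<le> p x + p y"
    and p_scale: "p (sc r x) = \<bar>r\<bar> * p x"
begin

lemma p_zero: "p 0 = 0"
  using p_scale[of 0 0] by simp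

lemma p_nonneg: "0 \<le> p x"
proof -
  have "p 0 \<le> p x + p (- x)" using p_triangle[of x "- x"] by simp
  moreover have "p (- x) = p x" using p_scale[of "-1" x] by simp
  ultimately show ?thesis using p_zero by simp
qed

lemma dominated_extension_value:
  assumes D_add: "\<And>x y. x \<in> D \<Longrightarrow> y \<in> D \<Longrightarrow> x + y \<in> D"
    and D_scale: "\<And>r x. x \<in> D \<Longrightarrow> sc r x \<in> D"
    and "0 \<in> D"
    and h_add: "\<And>x y. x \<in> D \<Longrightarrow> y \<in> D \<Longrightarrow> h (x + y) = h x + h y"
    and h_scale: "\<And>r x. x \<in> D \<Longrightarrow> h (sc r x) = r * h x"
    and h_le: "\<And>x. x \<in> D \<Longrightarrow> h x \<le> p x"
  shows "\<exists>c. \<forall>x\<in>D. \<forall>r. h x + r * c \<le> p (x + sc r z)"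
proof -
  have key: "h x - p (x - z) \<le> p (y + z) - h y" if "x \<in> D" "y \<in> D" for x y
  proof -
    have "h x + h y \<le> p (x + y)" using that h_add h_le D_add by metis
    also have "\<dots> = p ((x - z) + (y + z))" by (simp add: algebra_simps)
    also have "\<dots> \<le> p (x - z) + p (y + z)" by (rule p_triangle)
    finally show ?thesis by simp
  qed
  define c where "c = (SUP x\<in>D. h x - p (x - z))"
  have bdd: "bdd_above ((\<lambda>x. h x - p (x - z)) ` D)"
    using key[OF _ \<open>0 \<in> D\<close>] by (intro bdd_aboveI2) auto
  have c_lower: "h x - p (x - z) \<le> c" if "x \<in> D" for x
    unfolding c_def using bdd that by (rule cSUP_upper2) simp
  have c_upper: "c \<le> p (x + z) - h x" if "x \<in> D" for x
    unfolding c_def using \<open>0 \<in> D\<close> key[OF _ that] by (intro cSUP_least) auto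
  have "h x + r * c \<le> p (x + sc r z)" if x: "x \<in> D" for x r
  proof (cases r "0::real" rule: linorder_cases)
    case less
    define s where "s = - r"
    have s: "s > 0" using less s_def by simp
    have "s * (h (sc (1/s) x) - p (sc (1/s) x - z)) \<le> s * c"
      using c_lower[OF D_scale[OF x]] s by simp
    moreover have "s * (h (sc (1/s) x) - p (sc (1/s) x - z)) = h x - p (sc s (sc (1/s) x - z))"
      using s h_scale[OF x, of "1/s"] p_scale[of s "sc (1/s) x - z"] by (simp add: right_diff_distrib)
    moreover have "sc s (sc (1/s) x - z) = x + sc r z"
      using s s_def by (simp add: scale_right_diff_distrib)
    ultimately show ?thesis using s_def by simp
  next
    case equal
    then show ?thesis using h_le x by simp
  next
    case greater
    have "r * c \<le> r * (p (sc (1/r) x + z) - h (sc (1/r) x))"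
      using c_upper[OF D_scale[OF x]] greater by simp
    also have "\<dots> = p (sc r (sc (1/r) x + z)) - h x"
      using greater h_scale[OF x, of "1/r"] p_scale[of r "sc (1/r) x + z"] by (simp add: right_diff_distrib)
    also have "sc r (sc (1/r) x + z) = x + sc r z"
      using greater by (simp add: scale_right_distrib)
    finally show ?thesis by simp
  qed
  then show ?thesis by blast
qed

text \<open>Graphs of linear functionals on subspaces that are dominated by p and attain p at y0;
  a maximal one (Zorn) is defined everywhere.\<close>

definition norming_graph :: "'x \<Rightarrow> ('x \<times> real) set \<Rightarrow> bool" where
  "norming_graph y0 G \<longleftrightarrow>
     (\<forall>x a b. (x, a) \<in> G \<longrightarrow> (x, b) \<in> G \<longrightarrow> a = b) \<and>
     (\<forall>x a y b. (x, a) \<in> G \<longrightarrow> (y, b) \<in> G \<longrightarrow> (x + y, a + b) \<in> G) \<and>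
     (\<forall>x a r. (x, a) \<in> G \<longrightarrow> (sc r x, r * a) \<in> G) \<and>
     (\<forall>x a. (x, a) \<in> G \<longrightarrow> a \<le> p x) \<and>
     (y0, p y0) \<in> G"

context
  fixes y0 G assumes G: "norming_graph y0 G"
begin

lemma norming_graph_unique: "(x, a) \<in> G \<Longrightarrow> (x, b) \<in> G \<Longrightarrow> a = b"
  using G unfolding norming_graph_def by blast

lemma norming_graph_the: "(x, a) \<in> G \<Longrightarrow> (THE a. (x, a) \<in> G) = a"
  using norming_graph_unique by blast

lemma norming_graph_add: "(x, a) \<in> G \<Longrightarrow> (y, b) \<in> G \<Longrightarrow> (x + y, a + b) \<in> G"
  using G unfolding norming_graph_def by blast

lemma norming_graph_scale: "(x, a) \<in> G \<Longrightarrow> (sc r x, r * a) \<in> G"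
  using G unfolding norming_graph_def by blast

lemma norming_graph_le: "(x, a) \<in> G \<Longrightarrow> a \<le> p x"
  using G unfolding norming_graph_def by blast

lemma norming_graph_point: "(y0, p y0) \<in> G"
  using G unfolding norming_graph_def by blast

lemma norming_graph_zero: "(0, 0) \<in> G"
  using norming_graph_scale[OF norming_graph_point, of 0] by simp

end

lemma norming_graph_line: "norming_graph y0 (range (\<lambda>r. (sc r y0, r * p y0)))"
  unfolding norming_graph_def
proof (intro conjI allI impI)
  fix x a b
  assume "(x, a) \<in> range (\<lambda>r. (sc r y0, r * p y0))" "(x, b) \<in> range (\<lambda>r. (sc r y0, r * p y0))"
  then obtain r s where "(x, a) = (sc r y0, r * p y0)" "(x, b) = (sc s y0, s * p y0)" by blast
  then show "a = b" using p_zero by (cases "y0 = 0") auto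
next
  fix x a y b
  assume "(x, a) \<in> range (\<lambda>r. (sc r y0, r * p y0))" "(y, b) \<in> range (\<lambda>r. (sc r y0, r * p y0))"
  then obtain r s where "x = sc r y0" "a = r * p y0" "y = sc s y0" "b = s * p y0" by auto
  then have "(x + y, a + b) = (sc (r + s) y0, (r + s) * p y0)"
    by (simp add: algebra_simps)
  then show "(x + y, a + b) \<in> range (\<lambda>r. (sc r y0, r * p y0))" by blast
next
  fix x a r assume "(x, a) \<in> range (\<lambda>r. (sc r y0, r * p y0))"
  then obtain s where "x = sc s y0" "a = s * p y0" by auto
  then have "(sc r x, r * a) = (sc (r * s) y0, (r * s) * p y0)" by simp
  then show "(sc r x, r * a) \<in> range (\<lambda>r. (sc r y0, r * p y0))" by blast
next
  fix x a assume "(x, a) \<in> range (\<lambda>r. (sc r y0, r * p y0))"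
  then obtain s where "x = sc s y0" "a = s * p y0" by auto
  moreover have "s * p y0 \<le> \<bar>s\<bar> * p y0" using p_nonneg[of y0] by (simp add: mult_right_mono)
  ultimately show "a \<le> p x" using p_scale by simp
next
  show "(y0, p y0) \<in> range (\<lambda>r. (sc r y0, r * p y0))"
    by (rule image_eqI[of _ _ 1]) simp_all
qed

lemma norming_graph_Union_chain:
  assumes C: "C \<in> chains {G. norming_graph y0 G}" "C \<noteq> {}"
  shows "norming_graph y0 (\<Union>C)"
proof -
  have G: "\<And>G. G \<in> C \<Longrightarrow> norming_graph y0 G" using C(1) unfolding chains_def by blast
  have common: "\<exists>G\<in>C. u \<in> G \<and> v \<in> G" if "u \<in> \<Union>C" "v \<in> \<Union>C" for u v
    using that C(1) unfolding chains_def chain_subset_def by blast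
  obtain G1 where "G1 \<in> C" using C(2) by blast
  show ?thesis
    unfolding norming_graph_def
  proof (intro conjI allI impI)
    fix x a b assume "(x, a) \<in> \<Union>C" "(x, b) \<in> \<Union>C"
    then obtain G' where "G' \<in> C" "(x, a) \<in> G'" "(x, b) \<in> G'" using common by blast
    then show "a = b" using G norming_graph_unique by blast
  next
    fix x a y b assume "(x, a) \<in> \<Union>C" "(y, b) \<in> \<Union>C"
    then obtain G' where "G' \<in> C" "(x, a) \<in> G'" "(y, b) \<in> G'" using common by blast
    then show "(x + y, a + b) \<in> \<Union>C" using G norming_graph_add by blast
  next
    fix x a r assume "(x, a) \<in> \<Union>C"
    then show "(sc r x, r * a) \<in> \<Union>C" using G norming_graph_scale by blast
  next
    fix x a assume "(x, a) \<in> \<Union>C"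
    then show "a \<le> p x" using G norming_graph_le by blast
  next
    show "(y0, p y0) \<in> \<Union>C" using norming_graph_point[OF G] \<open>G1 \<in> C\<close> by blast
  qed
qed

lemma norming_graph_function:
  assumes M: "norming_graph y0 M"
  obtains D h where "\<And>x a. (x, a) \<in> M \<longleftrightarrow> x \<in> D \<and> a = h x"
    and "\<And>x y. x \<in> D \<Longrightarrow> y \<in> D \<Longrightarrow> x + y \<in> D" "\<And>r x. x \<in> D \<Longrightarrow> sc r x \<in> D" "0 \<in> D"
    and "\<And>x y. x \<in> D \<Longrightarrow> y \<in> D \<Longrightarrow> h (x + y) = h x + h y"
    and "\<And>r x. x \<in> D \<Longrightarrow> h (sc r x) = r * h x" "\<And>x. x \<in> D \<Longrightarrow> h x \<le> p x"
    and "y0 \<in> D" "h y0 = p y0"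
proof -
  define D where "D = fst ` M"
  define h where "h x = (THE a. (x, a) \<in> M)" for x
  have graph: "(x, a) \<in> M \<longleftrightarrow> x \<in> D \<and> a = h x" for x a
    using norming_graph_the[OF M] unfolding D_def h_def by force
  have hM: "(x, h x) \<in> M" if "x \<in> D" for x using that graph by blast
  show ?thesis
  proof
    show "(x, a) \<in> M \<longleftrightarrow> x \<in> D \<and> a = h x" for x a by (fact graph)
    fix x y r assume x: "x \<in> D"
    show "sc r x \<in> D" "h (sc r x) = r * h x"
      using graph norming_graph_scale[OF M hM[OF x]] by simp_all
    show "h x \<le> p x" using norming_graph_le[OF M hM[OF x]] .
    assume y: "y \<in> D"
    show "x + y \<in> D" "h (x + y) = h x + h y"
      using graph norming_graph_add[OF M hM[OF x] hM[OF y]] by simp_all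
  next
    show "0 \<in> D" "y0 \<in> D" "h y0 = p y0"
      using graph norming_graph_zero[OF M] norming_graph_point[OF M] by simp_all
  qed
qed

lemma norming_graph_extend:
  assumes M: "norming_graph y0 M" and z: "\<And>a. (z, a) \<notin> M"
  shows "\<exists>M'. norming_graph y0 M' \<and> M \<subset> M'"
proof -
  obtain D h where graph: "\<And>x a. (x, a) \<in> M \<longleftrightarrow> x \<in> D \<and> a = h x"
    and D_add: "\<And>x y. x \<in> D \<Longrightarrow> y \<in> D \<Longrightarrow> x + y \<in> D"
    and D_scale: "\<And>r x. x \<in> D \<Longrightarrow> sc r x \<in> D" and "0 \<in> D"
    and h_add: "\<And>x y. x \<in> D \<Longrightarrow> y \<in> D \<Longrightarrow> h (x + y) = h x + h y"
    and h_scale: "\<And>r x. x \<in> D \<Longrightarrow> h (sc r x) = r * h x"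
    and h_le: "\<And>x. x \<in> D \<Longrightarrow> h x \<le> p x" and "y0 \<in> D" "h y0 = p y0"
    using norming_graph_function[OF M] by blast
  obtain c where c: "\<And>x r. x \<in> D \<Longrightarrow> h x + r * c \<le> p (x + sc r z)"
    using dominated_extension_value[OF D_add D_scale \<open>0 \<in> D\<close> h_add h_scale h_le] by blast
  have "z \<notin> D" using z graph by blast
  have unique_coord: "r = r'" if "x + sc r z = x' + sc r' z" "x \<in> D" "x' \<in> D" for x x' r r'
  proof (rule ccontr)
    assume "r \<noteq> r'"
    have "sc (r' - r) z = x - x'" using that(1) by (simp add: algebra_simps)
    then have "sc (1 / (r' - r)) (x - x') = z" using \<open>r \<noteq> r'\<close> by (simp flip: \<open>sc (r' - r) z = x - x'\<close>)
    moreover have "x - x' \<in> D" using D_add[OF that(2) D_scale[OF that(3), of "-1"]] by simp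
    ultimately show False using D_scale[of "x - x'" "1 / (r' - r)"] \<open>z \<notin> D\<close> by simp
  qed
  define M' where "M' = {(x + sc r z, h x + r * c) | x r. x \<in> D}"
  have "norming_graph y0 M'"
    unfolding norming_graph_def
  proof (intro conjI allI impI)
    fix w a b assume "(w, a) \<in> M'" "(w, b) \<in> M'"
    then obtain x r x' r' where "w = x + sc r z" "a = h x + r * c" "x \<in> D"
      "w = x' + sc r' z" "b = h x' + r' * c" "x' \<in> D" unfolding M'_def by blast
    then show "a = b" using unique_coord by force
  next
    fix w a w' b assume "(w, a) \<in> M'" "(w', b) \<in> M'"
    then obtain x r x' r' where e: "w = x + sc r z" "a = h x + r * c" "x \<in> D"
      "w' = x' + sc r' z" "b = h x' + r' * c" "x' \<in> D" unfolding M'_def by blast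
    then have "(w + w', a + b) = ((x + x') + sc (r + r') z, h (x + x') + (r + r') * c)"
      using h_add by (simp add: algebra_simps)
    then show "(w + w', a + b) \<in> M'" unfolding M'_def using D_add e by blast
  next
    fix w a s assume "(w, a) \<in> M'"
    then obtain x r where e: "w = x + sc r z" "a = h x + r * c" "x \<in> D" unfolding M'_def by blast
    then have "(sc s w, s * a) = (sc s x + sc (s * r) z, h (sc s x) + (s * r) * c)"
      using h_scale by (simp add: algebra_simps)
    then show "(sc s w, s * a) \<in> M'" unfolding M'_def using D_scale e by blast
  next
    fix w a assume "(w, a) \<in> M'"
    then show "a \<le> p w" using c unfolding M'_def by blast
  next
    show "(y0, p y0) \<in> M'"
      unfolding M'_def using \<open>y0 \<in> D\<close> \<open>h y0 = p y0\<close> by (intro CollectI exI[of _ y0] exI[of _ 0]) simp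
  qed
  moreover have "M \<subseteq> M'"
  proof
    fix w assume "w \<in> M"
    then have "fst w \<in> D" "w = (fst w + sc 0 z, h (fst w) + 0 * c)"
      using graph[of "fst w" "snd w"] by (auto simp: prod_eq_iff)
    then show "w \<in> M'" unfolding M'_def by blast
  qed
  moreover have "(z, c) \<in> M'"
    using \<open>0 \<in> D\<close> h_scale[OF \<open>0 \<in> D\<close>, of 0] unfolding M'_def
    by (intro CollectI exI[of _ 0] exI[of _ 1]) simp
  ultimately show ?thesis using z by blast
qed

theorem norming_functional_exists:
  "\<exists>u. (\<forall>x y. u (x + y) = u x + u y) \<and> (\<forall>r x. u (sc r x) = r * u x) \<and>
       (\<forall>x. \<bar>u x\<bar> \<le> p x) \<and> u y0 = p y0"
proof -
  have "\<forall>C\<in>chains {G. norming_graph y0 G}. \<exists>U\<in>{G. norming_graph y0 G}. \<forall>X\<in>C. X \<subseteq> U"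
  proof
    fix C assume C: "C \<in> chains {G. norming_graph y0 G}"
    show "\<exists>U\<in>{G. norming_graph y0 G}. \<forall>X\<in>C. X \<subseteq> U"
    proof (cases "C = {}")
      case True
      then show ?thesis using norming_graph_line by blast
    next
      case False
      then show ?thesis using norming_graph_Union_chain[OF C] by blast
    qed
  qed
  from Zorn_Lemma2[OF this] obtain M where M: "norming_graph y0 M"
    and max: "\<And>X. norming_graph y0 X \<Longrightarrow> M \<subseteq> X \<Longrightarrow> X = M"
    by blast
  obtain D u where graph: "\<And>x a. (x, a) \<in> M \<longleftrightarrow> x \<in> D \<and> a = u x"
    and "\<And>x y. x \<in> D \<Longrightarrow> y \<in> D \<Longrightarrow> x + y \<in> D" "\<And>r x. x \<in> D \<Longrightarrow> sc r x \<in> D" "0 \<in> D"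
    and u_add: "\<And>x y. x \<in> D \<Longrightarrow> y \<in> D \<Longrightarrow> u (x + y) = u x + u y"
    and u_scale: "\<And>r x. x \<in> D \<Longrightarrow> u (sc r x) = r * u x" and u_le: "\<And>x. x \<in> D \<Longrightarrow> u x \<le> p x"
    and "y0 \<in> D" "u y0 = p y0"
    by (rule norming_graph_function[OF M]) blast
  have D: "x \<in> D" for x
  proof (rule ccontr)
    assume "x \<notin> D"
    then obtain M' where "norming_graph y0 M'" "M \<subset> M'"
      using norming_graph_extend[OF M, of x] graph by blast
    then show False using max by blast
  qed
  have "\<bar>u x\<bar> \<le> p x" for x
    using u_le[OF D, of x] u_le[OF D, of "sc (-1) x"] u_scale[OF D, of "-1" x] p_scale[of "-1" x]
    by (simp add: abs_le_iff)
  then show ?thesis using u_add[OF D D] u_scale[OF D] \<open>u y0 = p y0\<close> by blast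
qed

end

section \<open>Locally convex spaces and Minkowski functionals\<close>

lemma linear_by_add_scale:
  assumes "vector_space sm"
    and "\<And>x y. f (x + y) = f x + f y" and "\<And>c x. f (sm c x) = c * f x"
  shows "Vector_Spaces.linear sm ((*) :: complex \<Rightarrow> _) f"
  using assms
  unfolding Vector_Spaces.linear_def module_hom_def module_hom_axioms_def vector_space_def module_def
  by (auto simp: algebra_simps)

lemma continuous_on_UNIV_curry:
  assumes "continuous_on UNIV (\<lambda>p. f (fst p) (snd p))"
  shows continuous_on_UNIV_curry_right: "continuous_on UNIV (\<lambda>y. f c y)"
    and continuous_on_UNIV_curry_left: "continuous_on UNIV (\<lambda>x. f x d)"
proof -
  have "continuous_on UNIV ((\<lambda>p. f (fst p) (snd p)) \<circ> (\<lambda>y. (c, y)))"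
    "continuous_on UNIV ((\<lambda>p. f (fst p) (snd p)) \<circ> (\<lambda>x. (x, d)))"
    by (intro continuous_on_compose continuous_intros continuous_on_subset[OF assms]; simp)+
  then show "continuous_on UNIV (\<lambda>y. f c y)" "continuous_on UNIV (\<lambda>x. f x d)"
    by (simp_all add: o_def)
qed

lemma open_vimage_continuous: "continuous_on UNIV f \<Longrightarrow> open U \<Longrightarrow> open (f -` U)"
  using continuous_on_open_vimage[of UNIV f] by auto

locale lc_tvs =
  fixes sm :: "complex \<Rightarrow> 'x::{ab_group_add,t2_space} \<Rightarrow> 'x"
  assumes tvs: "complex_tvs sm" and lc: "locally_convex sm"
begin

sublocale vs: vector_space sm
  using tvs unfolding complex_tvs_def by blast

lemma continuous_add: "continuous_on UNIV (\<lambda>p::'x \<times> 'x. fst p + snd p)"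
  and continuous_scale: "continuous_on UNIV (\<lambda>p::complex \<times> 'x. sm (fst p) (snd p))"
  using tvs unfolding complex_tvs_def by blast+

lemmas continuous_translate = continuous_on_UNIV_curry_left[OF continuous_add]
  and continuous_scale_vector = continuous_on_UNIV_curry_right[OF continuous_scale]
  and continuous_scale_scalar = continuous_on_UNIV_curry_left[OF continuous_scale]

lemma zero_nbhd_sum:
  fixes U :: "'x set"
  assumes "open U" "0 \<in> U"
  shows "\<exists>W. open W \<and> 0 \<in> W \<and> (\<forall>w1\<in>W. \<forall>w2\<in>W. w1 + w2 \<in> U)"
proof -
  have "open ((\<lambda>p::'x \<times> 'x. fst p + snd p) -` U)" "(0, 0) \<in> (\<lambda>p::'x \<times> 'x. fst p + snd p) -` U"
    using open_vimage_continuous[OF continuous_add assms(1)] assms(2) by simp_all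
  then obtain A B where "open A" "open B" "(0, 0) \<in> A \<times> B"
    "A \<times> B \<subseteq> (\<lambda>p::'x \<times> 'x. fst p + snd p) -` U"
    by (rule open_prod_elim)
  then show ?thesis by (intro exI[of _ "A \<inter> B"]) auto
qed

lemma convex_rotation_invariant_nbhd:
  assumes "open U" "0 \<in> U"
  shows "\<exists>V. open V \<and> 0 \<in> V \<and> V \<subseteq> U \<and> cconvex sm V \<and> (\<forall>v\<in>V. sm \<i> v \<in> V)"
proof -
  obtain V0 where V0: "open V0" "0 \<in> V0" "V0 \<subseteq> U" "cconvex sm V0"
    using lc assms unfolding locally_convex_def by blast
  define R :: "complex set" where "R = {c. c ^ 4 = 1}"
  define V where "V = (\<Inter>c\<in>R. sm c -` V0)"
  have "finite R" unfolding R_def by (rule finite_roots_unity) simp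
  then have "open V"
    unfolding V_def by (rule open_INT) (use open_vimage_continuous[OF continuous_scale_vector V0(1)] in blast)
  moreover have "0 \<in> V" using V0(2) unfolding V_def by simp
  moreover have "V \<subseteq> U"
  proof
    fix v assume "v \<in> V"
    moreover have "1 \<in> R" unfolding R_def by simp
    ultimately have "sm 1 v \<in> V0" unfolding V_def by blast
    then show "v \<in> U" using V0(3) by auto
  qed
  moreover have "cconvex sm V"
    unfolding cconvex_def
  proof (intro ballI allI impI)
    fix v w and u :: real assume "v \<in> V" "w \<in> V" "0 \<le> u \<and> u \<le> 1"
    then have "sm (of_real u) (sm c v) + sm (of_real (1 - u)) (sm c w) \<in> V0" if "c \<in> R" for c
      using V0(4) that unfolding V_def cconvex_def by blast
    then show "sm (of_real u) v + sm (of_real (1 - u)) w \<in> V"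
      unfolding V_def by (simp add: vs.scale_right_distrib mult.commute)
  qed
  moreover have "sm \<i> v \<in> V" if "v \<in> V" for v
  proof -
    have "c * \<i> \<in> R" if "c \<in> R" for c using that unfolding R_def by (simp add: power_mult_distrib)
    then show ?thesis using \<open>v \<in> V\<close> unfolding V_def by simp
  qed
  ultimately show ?thesis by blast
qed

definition rscale :: "real \<Rightarrow> 'x \<Rightarrow> 'x" where "rscale r v = sm (complex_of_real r) v"

sublocale rs: vector_space rscale
  unfolding vector_space_def rscale_def
  by (simp add: vs.scale_right_distrib vs.scale_left_distrib)

lemma rotate_rscale: "sm \<i> (rscale r v) = rscale r (sm \<i> v)"
  unfolding rscale_def by (simp add: mult.commute)

lemma cconvex_rscale:
  "cconvex sm C \<longleftrightarrow> (\<forall>x\<in>C. \<forall>y\<in>C. \<forall>u. 0 \<le> u \<and> u \<le> 1 \<longrightarrow> rscale u x + rscale (1 - u) y \<in> C)"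
  unfolding cconvex_def rscale_def ..

definition rlinear :: "('x \<Rightarrow> real) \<Rightarrow> bool" where
  "rlinear u \<longleftrightarrow> (\<forall>x y. u (x + y) = u x + u y) \<and> (\<forall>r x. u (rscale r x) = r * u x)"

context
  fixes u assumes u: "rlinear u"
begin

lemma rlinear_add: "u (x + y) = u x + u y"
  and rlinear_rscale: "u (rscale r x) = r * u x"
  using u unfolding rlinear_def by blast+

lemma rlinear_uminus: "u (- x) = - u x"
  using rlinear_rscale[of "-1" x] by simp

lemma rlinear_diff: "u (x - y) = u x - u y"
  using rlinear_add[of x "- y"] rlinear_uminus[of y] by simp

lemma rlinear_zero: "u 0 = 0"
  using rlinear_rscale[of 0 0] by simp

lemma rlinear_sum: "u (sum f A) = (\<Sum>x\<in>A. u (f x))"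
  by (induction A rule: infinite_finite_induct) (simp_all add: rlinear_zero rlinear_add)

lemma rlinear_rotate: "rlinear (\<lambda>x. u (sm \<i> x))"
  unfolding rlinear_def by (simp add: vs.scale_right_distrib rotate_rscale rlinear_add rlinear_rscale)

end

lemma scale_Re_Im: "sm c x = rscale (Re c) x + rscale (Im c) (sm \<i> x)"
proof -
  have "c = complex_of_real (Re c) + complex_of_real (Im c) * \<i>" by (simp add: complex_eq_iff)
  then have "sm c x = sm (complex_of_real (Re c) + complex_of_real (Im c) * \<i>) x" by simp
  also have "\<dots> = rscale (Re c) x + rscale (Im c) (sm \<i> x)"
    unfolding rscale_def by (simp add: vs.scale_left_distrib)
  finally show ?thesis .
qed

lemma complexification_in_topdual:
  assumes u: "rlinear u" and "continuous_on UNIV u"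
  shows "(\<lambda>x. Complex (u x) (- u (sm \<i> x))) \<in> topdual sm"
proof -
  let ?f = "\<lambda>x. Complex (u x) (- u (sm \<i> x))"
  have "?f (sm c x) = c * ?f x" for c x
  proof -
    have "u (sm c x) = Re c * u x + Im c * u (sm \<i> x)"
      using scale_Re_Im[of c x] u by (simp add: rlinear_add rlinear_rscale)
    moreover have "u (sm \<i> (sm c x)) = Re c * u (sm \<i> x) - Im c * u x"
    proof -
      have "u (sm \<i> (sm c x)) = u (sm c (sm \<i> x))" by (simp add: mult.commute)
      also have "\<dots> = Re c * u (sm \<i> x) + Im c * u (sm \<i> (sm \<i> x))"
        by (simp only: scale_Re_Im[of c "sm \<i> x"] rlinear_add[OF u] rlinear_rscale[OF u])
      finally show ?thesis using u by (simp add: rlinear_uminus)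
    qed
    ultimately show ?thesis by (simp add: complex_eq_iff algebra_simps)
  qed
  moreover have "?f (x + y) = ?f x + ?f y" for x y
    using u by (simp add: vs.scale_right_distrib complex_eq_iff rlinear_add)
  ultimately have "Vector_Spaces.linear sm (*) ?f"
    by (intro linear_by_add_scale vs.vector_space_axioms)
  moreover have "continuous_on UNIV (\<lambda>x. u (sm \<i> x))"
    using continuous_on_compose2[OF assms(2) continuous_scale_vector[of \<i>]] by simp
  then have "continuous_on UNIV ?f"
    using assms(2) by (intro continuous_intros)
  ultimately show ?thesis unfolding topdual_def by blast
qed

end

locale minkowski_nbhd = lc_tvs sm for sm :: "complex \<Rightarrow> 'x::{ab_group_add,t2_space} \<Rightarrow> 'x" +
  fixes V :: "'x set"
  assumes V_open: "open V" and V_zero: "0 \<in> V" and V_convex: "cconvex sm V"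
    and V_rotate: "\<And>v. v \<in> V \<Longrightarrow> sm \<i> v \<in> V"
begin

definition radii :: "'x \<Rightarrow> real set" where "radii x = {r. 0 < r \<and> rscale (1/r) x \<in> V}"

definition minkowski :: "'x \<Rightarrow> real" where "minkowski x = Inf (radii x)"

lemma radii_iff: "r \<in> radii x \<longleftrightarrow> 0 < r \<and> rscale (1/r) x \<in> V"
  unfolding radii_def by simp

lemma V_shrink:
  assumes "v \<in> V" "0 \<le> t" "t \<le> 1" shows "rscale t v \<in> V"
proof -
  have "rscale t v + rscale (1 - t) 0 \<in> V"
    using V_convex V_zero assms unfolding cconvex_rscale by blast
  then show ?thesis by simp
qed

lemma V_rotate_iff: "sm \<i> v \<in> V \<longleftrightarrow> v \<in> V"
proof
  assume "sm \<i> v \<in> V"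
  then have "sm \<i> (sm \<i> (sm \<i> (sm \<i> v))) \<in> V" using V_rotate by blast
  then show "v \<in> V" by simp
qed (rule V_rotate)

lemma scale_near_mem:
  assumes "sm c0 x \<in> V"
  obtains d where "d > 0" "\<And>c. cmod (c - c0) < d \<Longrightarrow> sm c x \<in> V"
proof -
  have "open ((\<lambda>c. sm c x) -` V)"
    by (rule open_vimage_continuous[OF continuous_scale_scalar V_open])
  then obtain d where d: "d > 0" "ball c0 d \<subseteq> (\<lambda>c. sm c x) -` V"
    using assms by (meson open_contains_ball vimageI2)
  show ?thesis
  proof (rule that[OF d(1)])
    fix c assume "cmod (c - c0) < d"
    then have "c \<in> ball c0 d" by (simp add: dist_norm norm_minus_commute)
    then show "sm c x \<in> V" using d(2) by blast
  qed
qed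

lemma radii_nonempty: "radii x \<noteq> {}"
proof -
  obtain d where d: "d > 0" "\<And>c. cmod c < d \<Longrightarrow> sm c x \<in> V"
    using scale_near_mem[of 0 x] V_zero by auto
  then have "rscale (d/2) x \<in> V" unfolding rscale_def by simp
  then have "2/d \<in> radii x" using d(1) unfolding radii_iff by simp
  then show ?thesis by blast
qed

lemma radii_bdd_below: "bdd_below (radii x)"
  by (rule bdd_belowI[of _ 0]) (simp add: radii_iff)

lemma radii_upward: "r \<in> radii x \<Longrightarrow> r \<le> r' \<Longrightarrow> r' \<in> radii x"
proof -
  assume r: "r \<in> radii x" "r \<le> r'"
  then have r0: "r > 0" "rscale (1/r) x \<in> V" unfolding radii_iff by auto
  have "rscale (r/r') (rscale (1/r) x) \<in> V"
    by (rule V_shrink[OF r0(2)]) (use r r0 in auto)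
  moreover have "rscale (r/r') (rscale (1/r) x) = rscale (1/r') x"
    using r0 by simp
  ultimately show "r' \<in> radii x" using r0 r unfolding radii_iff by auto
qed

lemma minkowski_nonneg: "minkowski x \<ge> 0"
  unfolding minkowski_def using radii_nonempty by (rule cInf_greatest) (simp add: radii_iff)

lemma minkowski_le: "r \<in> radii x \<Longrightarrow> minkowski x \<le> r"
  unfolding minkowski_def by (rule cInf_lower[OF _ radii_bdd_below])

lemma minkowski_lt_imp_radius: "minkowski x < r \<Longrightarrow> r \<in> radii x"
proof -
  assume "minkowski x < r"
  then obtain r0 where "r0 \<in> radii x" "r0 < r"
    unfolding minkowski_def using radii_nonempty by (meson cInf_lessD)
  then show "r \<in> radii x" using radii_upward by auto
qed

lemma minkowski_lt_1_imp_mem: "minkowski x < 1 \<Longrightarrow> x \<in> V"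
  using minkowski_lt_imp_radius[of x 1] unfolding radii_iff by simp

lemma mem_imp_minkowski_lt_1:
  assumes "x \<in> V" shows "minkowski x < 1"
proof -
  obtain d where d: "d > 0" "\<And>c. cmod (c - 1) < d \<Longrightarrow> sm c x \<in> V"
    using scale_near_mem[of 1 x] assms by auto
  then have "rscale (1 / (1 / (1 + d/2))) x \<in> V" unfolding rscale_def by simp
  then have "minkowski x \<le> 1 / (1 + d/2)"
    using d(1) by (intro minkowski_le) (simp add: radii_iff)
  also have "\<dots> < 1" using d by (simp add: field_simps)
  finally show ?thesis .
qed

lemma minkowski_zero: "minkowski 0 = 0"
proof -
  have "minkowski 0 \<le> r" if "r > 0" for r
    using that V_zero by (intro minkowski_le) (simp add: radii_iff)
  then have "minkowski 0 \<le> 0" by (rule field_le_epsilon) simp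
  then show ?thesis using minkowski_nonneg[of 0] by simp
qed

lemma minkowski_pos_scale_le:
  assumes c: "c > 0" shows "minkowski (rscale c x) \<le> c * minkowski x"
proof (rule field_le_epsilon)
  fix e :: real assume e: "e > 0"
  have pe: "minkowski x + e/c \<in> radii x" using c e by (intro minkowski_lt_imp_radius) simp
  have pos: "minkowski x + e/c > 0" using minkowski_nonneg[of x] e c by (simp add: add_nonneg_pos)
  have "rscale (1 / (c * (minkowski x + e/c))) (rscale c x) = rscale (1 / (minkowski x + e/c)) x"
    using c by simp
  then have "c * (minkowski x + e/c) \<in> radii (rscale c x)"
    using pe pos c unfolding radii_iff by simp
  then have "minkowski (rscale c x) \<le> c * (minkowski x + e/c)" by (rule minkowski_le)
  also have "\<dots> = c * minkowski x + e" using c by (simp add: field_simps)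
  finally show "minkowski (rscale c x) \<le> c * minkowski x + e" .
qed

lemma minkowski_pos_scale:
  assumes c: "c > 0" shows "minkowski (rscale c x) = c * minkowski x"
proof -
  have "minkowski (rscale (1/c) (rscale c x)) \<le> (1/c) * minkowski (rscale c x)"
    using c by (intro minkowski_pos_scale_le) simp
  then have "c * minkowski x \<le> minkowski (rscale c x)" using c by (simp add: field_simps)
  then show ?thesis using minkowski_pos_scale_le[OF c, of x] by simp
qed

lemma minkowski_rotate: "minkowski (sm \<i> x) = minkowski x"
proof -
  have "radii (sm \<i> x) = radii x"
    unfolding radii_def using V_rotate_iff by (simp add: rotate_rscale[symmetric])
  then show ?thesis unfolding minkowski_def by simp
qed

lemma minkowski_uminus: "minkowski (- x) = minkowski x"
  using minkowski_rotate[of "sm \<i> x"] minkowski_rotate[of x] by simp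

lemma minkowski_rscale: "minkowski (rscale c x) = \<bar>c\<bar> * minkowski x"
proof (cases c "0::real" rule: linorder_cases)
  case less
  then show ?thesis
    using minkowski_uminus[of "rscale (-c) x"] minkowski_pos_scale[of "-c" x] by simp
qed (simp_all add: minkowski_zero minkowski_pos_scale)

lemma minkowski_triangle: "minkowski (x + y) \<le> minkowski x + minkowski y"
proof (rule field_le_epsilon)
  fix e :: real assume e: "e > 0"
  define r where "r = minkowski x + e/2"
  define s where "s = minkowski y + e/2"
  have r0: "r > 0" "s > 0" using minkowski_nonneg[of x] minkowski_nonneg[of y] e r_def s_def by auto
  have "r \<in> radii x" "s \<in> radii y" using e r_def s_def by (auto intro: minkowski_lt_imp_radius)
  then have "rscale (1/r) x \<in> V" "rscale (1/s) y \<in> V" unfolding radii_iff by auto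
  moreover have "0 \<le> r/(r+s)" "r/(r+s) \<le> 1" using r0 by auto
  ultimately have "rscale (r/(r+s)) (rscale (1/r) x) + rscale (1 - r/(r+s)) (rscale (1/s) y) \<in> V"
    using V_convex unfolding cconvex_rscale by blast
  moreover have "1 - r/(r+s) = s/(r+s)" using r0 by (simp add: field_simps)
  ultimately have "rscale (1/(r+s)) (x + y) \<in> V"
    using r0 by (simp add: rs.scale_right_distrib)
  then have "minkowski (x + y) \<le> r + s" using r0 by (intro minkowski_le) (simp add: radii_iff)
  then show "minkowski (x + y) \<le> minkowski x + minkowski y + e" using r_def s_def by simp
qed

sublocale mk: real_seminorm rscale minkowski
  by unfold_locales (simp_all add: minkowski_triangle minkowski_rscale)

lemma minkowski_small_near:
  assumes "d > 0" shows "\<exists>A. open A \<and> w \<in> A \<and> (\<forall>y\<in>A. minkowski (y - w) < d)"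
proof -
  define A where "A = (\<lambda>y. y + - w) -` (rscale (1/d) -` V)"
  have "open A"
    unfolding A_def rscale_def
    by (intro open_vimage_continuous continuous_translate continuous_scale_vector V_open)
  moreover have "w \<in> A" unfolding A_def using V_zero by simp
  moreover have "minkowski (y - w) < d" if "y \<in> A" for y
  proof -
    have "minkowski (rscale (1/d) (y - w)) < 1"
      using that unfolding A_def by (intro mem_imp_minkowski_lt_1) simp
    moreover have "minkowski (rscale (1/d) (y - w)) = minkowski (y - w) / d"
      using minkowski_pos_scale[of "1/d" "y - w"] assms by simp
    ultimately show ?thesis using assms by (simp add: divide_less_eq)
  qed
  ultimately show ?thesis by blast
qed

lemma rlinear_dominated_continuous:
  assumes u: "rlinear u" and C: "C \<ge> 0" and bound: "\<And>x. \<bar>u x\<bar> \<le> C * minkowski x"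
  shows "continuous_on UNIV u"
  unfolding continuous_on_topological
proof (intro ballI allI impI)
  fix w B assume "open B" "u w \<in> B"
  then obtain e where e: "e > 0" "ball (u w) e \<subseteq> B" by (meson open_contains_ball)
  obtain A where A: "open A" "w \<in> A" "\<forall>y\<in>A. minkowski (y - w) < e / (C + 1)"
    using minkowski_small_near[of "e/(C+1)" w] e C by auto
  have "u y \<in> B" if "y \<in> A" for y
  proof -
    have "\<bar>u y - u w\<bar> = \<bar>u (y - w)\<bar>" using rlinear_diff[OF u] by simp
    also have "\<dots> \<le> C * minkowski (y - w)" by (rule bound)
    also have "\<dots> \<le> (C + 1) * minkowski (y - w)"
      using minkowski_nonneg[of "y - w"] by (simp add: mult_right_mono)
    also have "\<dots> < (C + 1) * (e / (C + 1))" using A that C by (intro mult_strict_left_mono) auto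
    also have "\<dots> = e" using C by simp
    finally show ?thesis using e by (auto simp: dist_real_def)
  qed
  then show "\<exists>A. open A \<and> w \<in> A \<and> (\<forall>y\<in>UNIV. y \<in> A \<longrightarrow> u y \<in> B)" using A by blast
qed

lemma norming_rlinear: "\<exists>u. rlinear u \<and> (\<forall>x. \<bar>u x\<bar> \<le> minkowski x) \<and> u y = minkowski y"
  using mk.norming_functional_exists[of y] unfolding rlinear_def by blast

end

section \<open>Weakly bounded sets are bounded\<close>

lemma geometric_third_series_bound:
  fixes f :: "nat \<Rightarrow> real"
  assumes "\<And>j. \<bar>f j\<bar> \<le> c * (1/3) ^ Suc j"
  shows "summable f" and "\<bar>suminf f\<bar> \<le> c / 2"
proof -
  have "(\<lambda>j. (1/3) * (1/3::real) ^ j) sums ((1/3) * (1 / (1 - 1/3)))"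
    by (intro sums_mult geometric_sums) simp
  then have "(\<lambda>j. (1/3::real) ^ Suc j) sums (1/2)" by simp
  from sums_mult[OF this, of c] have g: "(\<lambda>j. c * (1/3::real) ^ Suc j) sums (c / 2)" by simp
  have sa: "summable (\<lambda>j. norm (f j))"
    using assms by (intro summable_comparison_test[OF _ sums_summable[OF g]]) simp
  then show "summable f" by (rule summable_norm_cancel)
  have "\<bar>suminf f\<bar> \<le> (\<Sum>j. norm (f j))" using summable_norm[OF sa] by simp
  also have "\<dots> \<le> (\<Sum>j. c * (1/3::real) ^ Suc j)"
    using assms by (intro suminf_le sa sums_summable[OF g]) simp
  finally show "\<bar>suminf f\<bar> \<le> c / 2" using sums_unique[OF g] by simp
qed

text \<open>The gliding hump: the k-th term of the series dominates the tail, and the earlier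
  terms are controlled by the bounds beta.\<close>

lemma weighted_series_hump:
  fixes f :: "nat \<Rightarrow> real"
  assumes dom: "\<And>j. \<bar>f j\<bar> \<le> P" and early: "\<And>j. j < k \<Longrightarrow> \<bar>f j\<bar> \<le> \<beta> j" and peak: "f k = P"
  shows "(1/3) ^ Suc k * P / 2 - (\<Sum>j<k. \<beta> j) \<le> (\<Sum>j. (1/3) ^ Suc j * f j)"
proof -
  let ?g = "\<lambda>j. (1/3::real) ^ Suc j * f j"
  have g_bound: "\<bar>?g j\<bar> \<le> P * (1/3) ^ Suc j" for j
    using dom[of j] by (simp add: abs_mult mult.commute mult_left_mono del: power_Suc)
  have tail: "\<bar>\<Sum>i. ?g (i + Suc k)\<bar> \<le> ((1/3) ^ Suc k * P) / 2"
  proof (rule geometric_third_series_bound(2))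
    fix i
    have "(1/3::real) ^ Suc (i + Suc k) = (1/3) ^ Suc k * (1/3) ^ Suc i"
      by (simp add: power_add[symmetric] add.commute del: power_Suc)
    then show "\<bar>?g (i + Suc k)\<bar> \<le> ((1/3) ^ Suc k * P) * (1/3) ^ Suc i"
      using g_bound[of "i + Suc k"] by (simp add: mult_ac del: power_Suc)
  qed
  have head: "\<bar>\<Sum>j<k. ?g j\<bar> \<le> (\<Sum>j<k. \<beta> j)"
  proof -
    have "\<bar>?g j\<bar> \<le> \<beta> j" if "j < k" for j
    proof -
      have "\<bar>?g j\<bar> \<le> \<bar>f j\<bar>"
        unfolding abs_mult by (intro mult_left_le_one_le) (simp_all add: power_le_one del: power_Suc)
      then show ?thesis using early[OF that] by simp
    qed
    then have "(\<Sum>j<k. \<bar>?g j\<bar>) \<le> (\<Sum>j<k. \<beta> j)" by (intro sum_mono) simp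
    then show ?thesis using sum_abs[of ?g "{..<k}"] by linarith
  qed
  have "(\<Sum>j. ?g j) = (\<Sum>i. ?g (i + Suc k)) + (\<Sum>j<k. ?g j) + (1/3) ^ Suc k * P"
    using suminf_split_initial_segment[OF geometric_third_series_bound(1)[OF g_bound], of "Suc k"]
      peak by simp
  then show ?thesis using tail head by linarith
qed

lemma topdual_zero: "vector_space sm \<Longrightarrow> (\<lambda>_. 0) \<in> topdual sm"
  unfolding topdual_def by (auto intro: linear_by_add_scale)

context lc_tvs
begin

lemma topspace_weak_topology: "topspace (weak_topology sm) = UNIV"
proof -
  have "UNIV \<in> {f -` V | f V. f \<in> topdual sm \<and> open V}"
    using topdual_zero[OF vs.vector_space_axioms] by (intro CollectI exI[of _ "\<lambda>_. 0"] exI[of _ UNIV]) auto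
  then show ?thesis unfolding weak_topology_def by auto
qed

lemma continuous_map_weak_topology:
  assumes "f \<in> topdual sm" shows "continuous_map (weak_topology sm) euclidean f"
  unfolding continuous_map_def topspace_weak_topology
proof (intro conjI allI impI)
  fix U :: "complex set" assume "openin euclidean U"
  then have "f -` U \<in> {f -` V | f V. f \<in> topdual sm \<and> open V}" using assms by auto
  then have "openin (weak_topology sm) (f -` U)"
    unfolding weak_topology_def openin_topology_generated_by_iff by (rule generate_topology_on.Basis)
  then show "openin (weak_topology sm) {x \<in> UNIV. f x \<in> U}" by (simp add: vimage_def)
qed simp

lemma weakly_compact_closure_imp_topdual_bounded:
  assumes "compactin (weak_topology sm) (weak_topology sm closure_of A)" and "f \<in> topdual sm"
  shows "\<exists>B. \<forall>e\<in>A. cmod (f e) \<le> B"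
proof -
  let ?T = "weak_topology sm"
  have "compactin euclidean (f ` (?T closure_of A))"
    using image_compactin[OF assms(1) continuous_map_weak_topology[OF assms(2)]] .
  then have "bounded (f ` (?T closure_of A))" by (simp add: compact_imp_bounded)
  then obtain B where B: "\<forall>y\<in>f ` (?T closure_of A). norm y \<le> B" unfolding bounded_iff by blast
  have "A \<subseteq> ?T closure_of A" by (rule closure_of_subset) (simp add: topspace_weak_topology)
  then show ?thesis using B by auto
qed

end

context minkowski_nbhd
begin

lemma rlinear_weighted_series:
  assumes u: "\<And>j. rlinear (u j)" and dom: "\<And>j x. \<bar>u j x\<bar> \<le> minkowski x"
  shows "rlinear (\<lambda>x. \<Sum>j. (1/3) ^ Suc j * u j x)"
    and "\<bar>\<Sum>j. (1/3) ^ Suc j * u j x\<bar> \<le> minkowski x"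
proof -
  have term_bound: "\<bar>(1/3) ^ Suc j * u j x\<bar> \<le> minkowski x * (1/3) ^ Suc j" for j x
    using dom[of j x] by (simp add: abs_mult mult.commute mult_left_mono del: power_Suc)
  note summable = geometric_third_series_bound(1)[OF term_bound]
  show "\<bar>\<Sum>j. (1/3) ^ Suc j * u j x\<bar> \<le> minkowski x"
    using geometric_third_series_bound(2)[OF term_bound, of x] minkowski_nonneg[of x] by linarith
  show "rlinear (\<lambda>x. \<Sum>j. (1/3) ^ Suc j * u j x)"
    unfolding rlinear_def
  proof (intro conjI allI)
    fix x y
    show "(\<Sum>j. (1/3) ^ Suc j * u j (x + y)) = (\<Sum>j. (1/3) ^ Suc j * u j x) + (\<Sum>j. (1/3) ^ Suc j * u j y)"
      using u summable by (simp add: rlinear_add distrib_left suminf_add del: power_Suc)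
    fix r
    show "(\<Sum>j. (1/3) ^ Suc j * u j (rscale r x)) = r * (\<Sum>j. (1/3) ^ Suc j * u j x)"
      using u summable
      by (simp add: rlinear_rscale mult.left_commute suminf_mult[symmetric] del: power_Suc)
  qed
qed

lemma weakly_bounded_imp_minkowski_bounded:
  assumes weakly_bounded: "\<And>u. rlinear u \<Longrightarrow> (\<forall>x. \<bar>u x\<bar> \<le> minkowski x) \<Longrightarrow> \<exists>B. \<forall>e\<in>A. \<bar>u e\<bar> \<le> B"
  shows "\<exists>K. \<forall>e\<in>A. minkowski e \<le> K"
proof (rule ccontr)
  assume unbounded: "\<not> (\<exists>K. \<forall>e\<in>A. minkowski e \<le> K)"
  define pick where "pick K = (SOME e. e \<in> A \<and> minkowski e > K)" for K
  have "\<forall>K. \<exists>e. e \<in> A \<and> minkowski e > K" using unbounded by (auto simp: not_le)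
  then have pick: "pick K \<in> A \<and> minkowski (pick K) > K" for K
    unfolding pick_def using someI_ex[of "\<lambda>e. e \<in> A \<and> K < minkowski e"] by blast
  define norming where
    "norming y = (SOME u. rlinear u \<and> (\<forall>x. \<bar>u x\<bar> \<le> minkowski x) \<and> u y = minkowski y)" for y
  have norming: "rlinear (norming y) \<and> (\<forall>x. \<bar>norming y x\<bar> \<le> minkowski x) \<and> norming y y = minkowski y" for y
    unfolding norming_def using norming_rlinear[of y] by (rule someI_ex)
  define bound where "bound u = (SOME B. \<forall>e\<in>A. \<bar>u e\<bar> \<le> B)" for u :: "'x \<Rightarrow> real"
  have bound: "\<forall>e\<in>A. \<bar>norming y e\<bar> \<le> bound (norming y)" for y
    unfolding bound_def using weakly_bounded norming someI_ex[of "\<lambda>B. \<forall>e\<in>A. \<bar>norming y e\<bar> \<le> B"]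
    by blast
  txt \<open>T k is the sum of the bounds of the first k functionals; the k-th point is chosen
    so large that its own hump beats T k + k.\<close>
  define L where "L k t = (real k + t) * (2 * 3 ^ Suc k)" for k :: nat and t :: real
  define T where "T = rec_nat 0 (\<lambda>k t. t + bound (norming (pick (L k t))))"
  define e where "e k = pick (L k (T k))" for k
  define u where "u k = norming (e k)" for k
  have e_in: "e k \<in> A" and e_big: "minkowski (e k) > L k (T k)" for k
    unfolding e_def using pick by blast+
  have T_sum: "T k = (\<Sum>j<k. bound (u j))" for k
    by (induction k) (simp_all add: T_def u_def e_def)
  define U where "U x = (\<Sum>j. (1/3) ^ Suc j * u j x)" for x
  have "rlinear U" "\<And>x. \<bar>U x\<bar> \<le> minkowski x"
    unfolding U_def using norming by (intro rlinear_weighted_series; simp add: u_def)+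
  then obtain B where B: "\<forall>e\<in>A. \<bar>U e\<bar> \<le> B"
    using weakly_bounded by blast
  have hump: "U (e k) > real k" for k
  proof -
    have "(1/3) ^ Suc k * minkowski (e k) / 2 - (\<Sum>j<k. bound (u j)) \<le> U (e k)"
      unfolding U_def
    proof (rule weighted_series_hump)
      show "\<bar>u j (e k)\<bar> \<le> minkowski (e k)" for j using norming unfolding u_def by blast
      show "\<bar>u j (e k)\<bar> \<le> bound (u j)" for j using bound e_in unfolding u_def by blast
      show "u k (e k) = minkowski (e k)" using norming unfolding u_def by blast
    qed
    moreover have "(1/3::real) ^ Suc k * minkowski (e k) / 2 = minkowski (e k) / (2 * 3 ^ Suc k)"
      by (simp add: power_one_over del: power_Suc)
    moreover have "real k + T k < minkowski (e k) / (2 * 3 ^ Suc k)"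
      using e_big[of k] unfolding L_def by (simp add: pos_less_divide_eq del: power_Suc)
    ultimately show ?thesis using T_sum by simp
  qed
  obtain k :: nat where "real k \<ge> B" using real_arch_simple by blast
  moreover have "\<bar>U (e k)\<bar> \<le> B" using B e_in by blast
  ultimately show False using hump[of k] by linarith
qed

end

lemma (in minkowski_nbhd) weakly_compact_closure_imp_minkowski_bounded:
  assumes "compactin (weak_topology sm) (weak_topology sm closure_of A)"
  shows "\<exists>K. \<forall>e\<in>A. minkowski e \<le> K"
proof (rule weakly_bounded_imp_minkowski_bounded)
  fix u assume u: "rlinear u" "\<forall>x. \<bar>u x\<bar> \<le> minkowski x"
  then have "continuous_on UNIV u" by (intro rlinear_dominated_continuous[of _ 1]) auto
  then obtain B where "\<forall>e\<in>A. cmod (Complex (u e) (- u (sm \<i> e))) \<le> B"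
    using weakly_compact_closure_imp_topdual_bounded[OF assms complexification_in_topdual[OF u(1)]]
    by blast
  then have "\<forall>e\<in>A. \<bar>u e\<bar> \<le> B" using abs_Re_le_cmod order_trans by fastforce
  then show "\<exists>B. \<forall>e\<in>A. \<bar>u e\<bar> \<le> B" ..
qed

section \<open>Sums of increments over disjoint intervals\<close>

text \<open>With increasing_from m s, the points s 1 < ... < s (2m) play the role of
  t_1 < ... < t_2n in the definition of E(a,b).\<close>

context
  fixes x :: "real \<Rightarrow> 'x::ab_group_add" and a :: real
begin

definition increasing_from :: "nat \<Rightarrow> (nat \<Rightarrow> real) \<Rightarrow> bool" where
  "increasing_from m s \<longleftrightarrow> (1 \<le> m \<longrightarrow> a \<le> s 1) \<and> (\<forall>i\<in>{1..<2*m}. s i < s (Suc i))"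

definition alternating_sum :: "nat \<Rightarrow> (nat \<Rightarrow> real) \<Rightarrow> 'x" where
  "alternating_sum m s = (\<Sum>i\<in>{1..m}. x (s (2*i)) - x (s (2*i - 1)))"

lemma alternating_sum_Suc:
  "alternating_sum (Suc m) s = alternating_sum m s + (x (s (2 * Suc m)) - x (s (2 * Suc m - 1)))"
  unfolding alternating_sum_def by simp

lemma alternating_sum_cong:
  "(\<And>i. 1 \<le> i \<Longrightarrow> i \<le> 2*m \<Longrightarrow> s i = s' i) \<Longrightarrow> alternating_sum m s = alternating_sum m s'"
  unfolding alternating_sum_def by (intro sum.cong refl) auto

lemma alternating_sum_append:
  assumes s: "increasing_from m s" and gap: "m = 0 \<or> s (2*m) < \<alpha>" and "a \<le> \<alpha>" "\<alpha> < \<beta>"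
  defines "s' \<equiv> s(2*m + 1 := \<alpha>, 2*m + 2 := \<beta>)"
  shows "increasing_from (Suc m) s'" and "s' (2 * Suc m) = \<beta>"
    and "alternating_sum (Suc m) s' = alternating_sum m s + (x \<beta> - x \<alpha>)"
proof -
  show "increasing_from (Suc m) s'"
    unfolding increasing_from_def
  proof (intro conjI impI ballI)
    show "a \<le> s' 1" using s gap \<open>a \<le> \<alpha>\<close> unfolding increasing_from_def s'_def by auto
  next
    fix i assume "i \<in> {1..<2 * Suc m}"
    then consider "i < 2*m" | "i = 2*m" "m \<noteq> 0" | "i = 2*m + 1" by force
    then show "s' i < s' (Suc i)"
      using s gap \<open>\<alpha> < \<beta>\<close> \<open>i \<in> {1..<2 * Suc m}\<close>
      by cases (auto simp: increasing_from_def s'_def)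
  qed
  show "s' (2 * Suc m) = \<beta>" unfolding s'_def by simp
  have "alternating_sum m s' = alternating_sum m s" by (rule alternating_sum_cong) (simp add: s'_def)
  then show "alternating_sum (Suc m) s' = alternating_sum m s + (x \<beta> - x \<alpha>)"
    unfolding alternating_sum_Suc by (simp add: s'_def)
qed

text \<open>An interval adjacent to the last one is merged with it, since E(a,b) only admits
  strictly increasing points.\<close>

lemma alternating_sum_merge:
  assumes s: "increasing_from m s" "1 \<le> m" and adjacent: "s (2*m) = \<alpha>" and "\<alpha> < \<beta>"
  defines "s' \<equiv> s(2*m := \<beta>)"
  shows "increasing_from m s'" and "s' (2*m) = \<beta>"
    and "alternating_sum m s' = alternating_sum m s + (x \<beta> - x \<alpha>)"
proof -
  show "increasing_from m s'"
    unfolding increasing_from_def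
  proof (intro conjI impI ballI)
    show "a \<le> s' 1" using s unfolding increasing_from_def s'_def by auto
  next
    fix i assume i: "i \<in> {1..<2 * m}"
    then have "s i < s (Suc i)" using s unfolding increasing_from_def by auto
    then show "s' i < s' (Suc i)" using i adjacent \<open>\<alpha> < \<beta>\<close> unfolding s'_def by auto
  qed
  show "s' (2*m) = \<beta>" unfolding s'_def by simp
  obtain m0 where m0: "m = Suc m0" using s(2) by (cases m) auto
  have "alternating_sum m0 s' = alternating_sum m0 s" by (rule alternating_sum_cong) (simp add: s'_def m0)
  moreover have "s' (2 * Suc m0) = \<beta>" "s' (2 * Suc m0 - 1) = s (2 * Suc m0 - 1)"
    unfolding s'_def m0 by simp_all
  ultimately show "alternating_sum m s' = alternating_sum m s + (x \<beta> - x \<alpha>)"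
    using adjacent unfolding m0 alternating_sum_Suc by simp
qed

lemma interval_sum_alternating:
  assumes "finite F" "\<forall>(\<alpha>, \<beta>)\<in>F. a \<le> \<alpha> \<and> \<alpha> < \<beta> \<and> \<beta> \<le> c"
    and "\<forall>(\<alpha>, \<beta>)\<in>F. \<forall>(\<alpha>', \<beta>')\<in>F. (\<alpha>, \<beta>) \<noteq> (\<alpha>', \<beta>') \<longrightarrow> \<beta> \<le> \<alpha>' \<or> \<beta>' \<le> \<alpha>"
  shows "\<exists>m s. increasing_from m s \<and> (\<Sum>(\<alpha>, \<beta>)\<in>F. x \<beta> - x \<alpha>) = alternating_sum m s
    \<and> (1 \<le> m \<longrightarrow> s (2*m) \<le> c)"
  using assms
proof (induction "card F" arbitrary: F c rule: less_induct)
  case less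
  show ?case
  proof (cases "F = {}")
    case True
    then show ?thesis
      by (intro exI[of _ 0] exI[of _ "\<lambda>_. 0"]) (simp add: increasing_from_def alternating_sum_def)
  next
    case False
    define \<beta>0 where "\<beta>0 = Max (snd ` F)"
    have "\<beta>0 \<in> snd ` F" unfolding \<beta>0_def using False less.prems(1) by (intro Max_in) auto
    then obtain \<alpha>0 where in0: "(\<alpha>0, \<beta>0) \<in> F" by force
    have p0: "a \<le> \<alpha>0" "\<alpha>0 < \<beta>0" "\<beta>0 \<le> c" using less.prems(2) in0 by auto
    define F' where "F' = F - {(\<alpha>0, \<beta>0)}"
    have left: "\<beta> \<le> \<alpha>0" if "(\<alpha>, \<beta>) \<in> F'" for \<alpha> \<beta>
    proof -
      have "(\<alpha>, \<beta>) \<in> F" "(\<alpha>, \<beta>) \<noteq> (\<alpha>0, \<beta>0)" using that F'_def by auto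
      moreover have "\<beta> \<le> \<beta>0" unfolding \<beta>0_def using less.prems(1) \<open>(\<alpha>, \<beta>) \<in> F\<close> by (intro Max_ge) force+
      ultimately show ?thesis using less.prems(2,3) in0 by fastforce
    qed
    have "card F' < card F" unfolding F'_def by (rule card_Diff1_less[OF less.prems(1) in0])
    moreover have "\<forall>(\<alpha>, \<beta>)\<in>F'. a \<le> \<alpha> \<and> \<alpha> < \<beta> \<and> \<beta> \<le> \<alpha>0"
      using less.prems(2) left unfolding F'_def by auto
    moreover have "\<forall>(\<alpha>, \<beta>)\<in>F'. \<forall>(\<alpha>', \<beta>')\<in>F'. (\<alpha>, \<beta>) \<noteq> (\<alpha>', \<beta>') \<longrightarrow> \<beta> \<le> \<alpha>' \<or> \<beta>' \<le> \<alpha>"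
      using less.prems(3) unfolding F'_def by blast
    ultimately obtain m s where s: "increasing_from m s" "(\<Sum>(\<alpha>, \<beta>)\<in>F'. x \<beta> - x \<alpha>) = alternating_sum m s"
      "1 \<le> m \<longrightarrow> s (2*m) \<le> \<alpha>0"
      using less.hyps[of F' \<alpha>0] less.prems(1) unfolding F'_def by blast
    have sum_F: "(\<Sum>(\<alpha>, \<beta>)\<in>F. x \<beta> - x \<alpha>) = alternating_sum m s + (x \<beta>0 - x \<alpha>0)"
      using sum.remove[OF less.prems(1) in0, of "\<lambda>(\<alpha>, \<beta>). x \<beta> - x \<alpha>"] s(2)
      unfolding F'_def by (simp add: add.commute)
    show ?thesis
    proof (cases "1 \<le> m \<and> s (2*m) = \<alpha>0")
      case True
      then show ?thesis using alternating_sum_merge[OF s(1) _ _ p0(2)] sum_F p0(3) by metis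
    next
      case False
      then have "m = 0 \<or> s (2*m) < \<alpha>0" using s(3) by auto
      then show ?thesis using alternating_sum_append[OF s(1) _ p0(1,2)] sum_F p0(3) by metis
    qed
  qed
qed

end

lemma interval_sum_in_Eset:
  assumes "finite F" "\<forall>(\<alpha>, \<beta>)\<in>F. a \<le> \<alpha> \<and> \<alpha> < \<beta> \<and> \<beta> \<le> b"
    and "\<forall>(\<alpha>, \<beta>)\<in>F. \<forall>(\<alpha>', \<beta>')\<in>F. (\<alpha>, \<beta>) \<noteq> (\<alpha>', \<beta>') \<longrightarrow> \<beta> \<le> \<alpha>' \<or> \<beta>' \<le> \<alpha>"
  shows "(\<Sum>(\<alpha>, \<beta>)\<in>F. x \<beta> - x \<alpha>) \<in> insert 0 (Eset x a b)"
proof -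
  obtain m s where s: "increasing_from a m s" "(\<Sum>(\<alpha>, \<beta>)\<in>F. x \<beta> - x \<alpha>) = alternating_sum x m s"
    "1 \<le> m \<longrightarrow> s (2*m) \<le> b"
    using interval_sum_alternating[OF assms] by blast
  show ?thesis
  proof (cases "m = 0")
    case True
    then show ?thesis using s by (simp add: alternating_sum_def)
  next
    case False
    then show ?thesis using s unfolding Eset_def
      by (intro insertI2 CollectI exI[of _ m] exI[of _ s]) (auto simp: increasing_from_def alternating_sum_def)
  qed
qed

section \<open>Tagged divisions and common refinements\<close>

context
  fixes a b :: real and n :: nat and t s :: "nat \<Rightarrow> real"
  assumes div: "tagged_div a b n t s"
begin

lemma tagged_div_step: "i < n \<Longrightarrow> t i \<le> t (Suc i)"
  and tagged_div_tag: "i < n \<Longrightarrow> t i \<le> s i \<and> s i \<le> t (Suc i)"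
  and tagged_div_ends: "t 0 = a" "t n = b"
  using div unfolding tagged_div_def by blast+

lemma tagged_div_mono: "i \<le> j \<Longrightarrow> j \<le> n \<Longrightarrow> t i \<le> t j"
proof (induction j rule: dec_induct)
  case (step j)
  then show ?case using tagged_div_step[of j] by simp
qed simp

lemma tagged_div_range: "i \<le> n \<Longrightarrow> a \<le> t i \<and> t i \<le> b"
  using tagged_div_mono[of 0 i] tagged_div_mono[of i n] tagged_div_ends by auto

end

lemma mesh_ge: "i < n \<Longrightarrow> \<bar>t (Suc i) - t i\<bar> \<le> mesh n t"
  unfolding mesh_def by (rule Max_ge) (auto simp: setcompr_eq_image)

lemma mesh_le: "(\<And>i. i < n \<Longrightarrow> \<bar>t (Suc i) - t i\<bar> \<le> d) \<Longrightarrow> 0 \<le> d \<Longrightarrow> mesh n t \<le> d"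
  unfolding mesh_def by (subst Max_le_iff) (auto simp: setcompr_eq_image)

text \<open>For two divisions t and q, cell_incr i k is the increment of x over the (possibly empty)
  intersection of [t i, t (i+1)] and [q k, q (k+1)]; these increments form a common refinement.\<close>

context
  fixes x :: "real \<Rightarrow> 'x::ab_group_add" and t q :: "nat \<Rightarrow> real"
begin

definition cell_lo :: "nat \<Rightarrow> nat \<Rightarrow> real" where "cell_lo i k = max (t i) (q k)"

definition cell_hi :: "nat \<Rightarrow> nat \<Rightarrow> real" where "cell_hi i k = min (t (Suc i)) (q (Suc k))"

definition cell_incr :: "nat \<Rightarrow> nat \<Rightarrow> 'x" where
  "cell_incr i k = (if cell_lo i k \<le> cell_hi i k then x (cell_hi i k) - x (cell_lo i k) else 0)"

lemma cell_incr_nonzero: "cell_incr i k \<noteq> 0 \<Longrightarrow> cell_lo i k < cell_hi i k"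
  unfolding cell_incr_def by (cases "cell_lo i k = cell_hi i k") (auto split: if_splits)

lemma cell_incr_clamp_row:
  assumes "t i \<le> t (Suc i)" "q k \<le> q (Suc k)"
  shows "cell_incr i k = x (max (t i) (min (t (Suc i)) (q (Suc k)))) - x (max (t i) (min (t (Suc i)) (q k)))"
proof (cases "cell_lo i k \<le> cell_hi i k")
  case True
  then have "max (t i) (min (t (Suc i)) (q (Suc k))) = cell_hi i k"
    "max (t i) (min (t (Suc i)) (q k)) = cell_lo i k"
    using assms unfolding cell_lo_def cell_hi_def by (auto simp: max_def min_def split: if_splits)
  then show ?thesis using True unfolding cell_incr_def by simp
next
  case False
  then have "max (t i) (min (t (Suc i)) (q (Suc k))) = max (t i) (min (t (Suc i)) (q k))"
    using assms unfolding cell_lo_def cell_hi_def by (auto simp: max_def min_def split: if_splits)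
  then show ?thesis using False unfolding cell_incr_def by simp
qed

lemma cell_incr_clamp_column:
  assumes "t i \<le> t (Suc i)" "q k \<le> q (Suc k)"
  shows "cell_incr i k = x (max (q k) (min (q (Suc k)) (t (Suc i)))) - x (max (q k) (min (q (Suc k)) (t i)))"
proof (cases "cell_lo i k \<le> cell_hi i k")
  case True
  then have "max (q k) (min (q (Suc k)) (t (Suc i))) = cell_hi i k"
    "max (q k) (min (q (Suc k)) (t i)) = cell_lo i k"
    using assms unfolding cell_lo_def cell_hi_def by (auto simp: max_def min_def split: if_splits)
  then show ?thesis using True unfolding cell_incr_def by simp
next
  case False
  then have "max (q k) (min (q (Suc k)) (t (Suc i))) = max (q k) (min (q (Suc k)) (t i))"
    using assms unfolding cell_lo_def cell_hi_def by (auto simp: max_def min_def split: if_splits)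
  then show ?thesis using False unfolding cell_incr_def by simp
qed

context
  fixes a b :: real and n m :: nat and s \<sigma> :: "nat \<Rightarrow> real"
  assumes P: "tagged_div a b n t s" and Q: "tagged_div a b m q \<sigma>"
begin

lemma sum_cell_incr_row:
  assumes i: "i < n" shows "(\<Sum>k<m. cell_incr i k) = x (t (Suc i)) - x (t i)"
proof -
  let ?F = "\<lambda>k. x (max (t i) (min (t (Suc i)) (q k)))"
  have "(\<Sum>k<m. cell_incr i k) = (\<Sum>k<m. ?F (Suc k) - ?F k)"
    using cell_incr_clamp_row tagged_div_step[OF P i] tagged_div_step[OF Q] by (intro sum.cong) auto
  also have "\<dots> = ?F m - ?F 0" by (rule sum_lessThan_telescope)
  also have "?F m = x (t (Suc i))"
    using tagged_div_ends[OF Q] tagged_div_range[OF P, of "Suc i"] tagged_div_step[OF P i] i by simp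
  also have "?F 0 = x (t i)"
    using tagged_div_ends[OF Q] tagged_div_range[OF P, of i] tagged_div_step[OF P i] i by simp
  finally show ?thesis .
qed

lemma sum_cell_incr_column:
  assumes k: "k < m" shows "(\<Sum>i<n. cell_incr i k) = x (q (Suc k)) - x (q k)"
proof -
  let ?F = "\<lambda>i. x (max (q k) (min (q (Suc k)) (t i)))"
  have "(\<Sum>i<n. cell_incr i k) = (\<Sum>i<n. ?F (Suc i) - ?F i)"
    using cell_incr_clamp_column tagged_div_step[OF Q k] tagged_div_step[OF P] by (intro sum.cong) auto
  also have "\<dots> = ?F n - ?F 0" by (rule sum_lessThan_telescope)
  also have "?F n = x (q (Suc k))"
    using tagged_div_ends[OF P] tagged_div_range[OF Q, of "Suc k"] tagged_div_step[OF Q k] k by simp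
  also have "?F 0 = x (q k)"
    using tagged_div_ends[OF P] tagged_div_range[OF Q, of k] tagged_div_step[OF Q k] k by simp
  finally show ?thesis .
qed

lemma cells_nonoverlapping:
  assumes "i < n" "k < m" "i' < n" "k' < m" "(i, k) \<noteq> (i', k')"
  shows "cell_hi i k \<le> cell_lo i' k' \<or> cell_hi i' k' \<le> cell_lo i k"
proof -
  consider "i < i'" | "i' < i" | "k < k'" | "k' < k" using assms(5) by fastforce
  then show ?thesis
  proof cases
    case 1
    then have "t (Suc i) \<le> t i'" using tagged_div_mono[OF P, of "Suc i" i'] assms by simp
    then show ?thesis unfolding cell_lo_def cell_hi_def by auto
  next
    case 2
    then have "t (Suc i') \<le> t i" using tagged_div_mono[OF P, of "Suc i'" i] assms by simp
    then show ?thesis unfolding cell_lo_def cell_hi_def by auto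
  next
    case 3
    then have "q (Suc k) \<le> q k'" using tagged_div_mono[OF Q, of "Suc k" k'] assms by simp
    then show ?thesis unfolding cell_lo_def cell_hi_def by auto
  next
    case 4
    then have "q (Suc k') \<le> q k" using tagged_div_mono[OF Q, of "Suc k'" k] assms by simp
    then show ?thesis unfolding cell_lo_def cell_hi_def by auto
  qed
qed

lemma cell_tags_close:
  assumes "i < n" "k < m" "cell_incr i k \<noteq> 0" "mesh n t < \<delta>" "mesh m q < \<delta>"
  shows "\<bar>s i - \<sigma> k\<bar> < 2 * \<delta>"
proof -
  have "cell_lo i k < cell_hi i k" using cell_incr_nonzero assms(3) .
  moreover have "t (Suc i) - t i < \<delta>" "q (Suc k) - q k < \<delta>"
    using mesh_ge[OF assms(1), of t] mesh_ge[OF assms(2), of q] assms(4,5) by simp_all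
  ultimately show ?thesis
    using tagged_div_tag[OF P assms(1)] tagged_div_tag[OF Q assms(2)]
    unfolding cell_lo_def cell_hi_def by (simp add: abs_less_iff)
qed

lemma sum_cell_incr_in_Eset:
  assumes S: "S \<subseteq> {..<n} \<times> {..<m}"
  shows "(\<Sum>(i, k)\<in>S. cell_incr i k) \<in> insert 0 (Eset x a b)"
proof -
  define S' where "S' = {(i, k)\<in>S. cell_lo i k < cell_hi i k}"
  define J where "J = (\<lambda>(i, k). (cell_lo i k, cell_hi i k))"
  have "finite S" using S finite_subset by blast
  then have "finite S'" unfolding S'_def by (rule rev_finite_subset) auto
  have "(\<Sum>(i, k)\<in>S. cell_incr i k) = (\<Sum>(i, k)\<in>S'. cell_incr i k)"
    unfolding S'_def by (rule sum.mono_neutral_right[OF \<open>finite S\<close>]) (use cell_incr_nonzero in fastforce)+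
  have separated: "cell_hi i k \<le> cell_lo i' k' \<or> cell_hi i' k' \<le> cell_lo i k"
    if "(i, k) \<in> S'" "(i', k') \<in> S'" "(i, k) \<noteq> (i', k')" for i k i' k'
    using that S by (intro cells_nonoverlapping) (auto simp: S'_def)
  have "inj_on J S'"
  proof (rule inj_onI)
    fix u v assume uv: "u \<in> S'" "v \<in> S'" "J u = J v"
    obtain i k i' k' where "u = (i, k)" "v = (i', k')" by fastforce
    then show "u = v" using separated[of i k i' k'] uv unfolding J_def S'_def by auto
  qed
  then have "(\<Sum>(\<alpha>, \<beta>)\<in>J ` S'. x \<beta> - x \<alpha>) = (\<Sum>u\<in>S'. (\<lambda>(\<alpha>, \<beta>). x \<beta> - x \<alpha>) (J u))"
    by (rule sum.reindex[unfolded comp_def])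
  also have "\<dots> = (\<Sum>(i, k)\<in>S'. cell_incr i k)"
    unfolding J_def S'_def cell_incr_def by (intro sum.cong refl) auto
  finally have "(\<Sum>(i, k)\<in>S'. cell_incr i k) = (\<Sum>(\<alpha>, \<beta>)\<in>J ` S'. x \<beta> - x \<alpha>)" ..
  moreover have "(\<Sum>(\<alpha>, \<beta>)\<in>J ` S'. x \<beta> - x \<alpha>) \<in> insert 0 (Eset x a b)"
  proof (rule interval_sum_in_Eset)
    show "finite (J ` S')" using \<open>finite S'\<close> by simp
    have "a \<le> cell_lo i k \<and> cell_lo i k < cell_hi i k \<and> cell_hi i k \<le> b" if "(i, k) \<in> S'" for i k
      using that S tagged_div_range[OF P, of i] tagged_div_range[OF P, of "Suc i"]
      unfolding S'_def cell_lo_def cell_hi_def by auto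
    then show "\<forall>(\<alpha>, \<beta>)\<in>J ` S'. a \<le> \<alpha> \<and> \<alpha> < \<beta> \<and> \<beta> \<le> b" unfolding J_def by auto
    show "\<forall>(\<alpha>, \<beta>)\<in>J ` S'. \<forall>(\<alpha>', \<beta>')\<in>J ` S'. (\<alpha>, \<beta>) \<noteq> (\<alpha>', \<beta>') \<longrightarrow> \<beta> \<le> \<alpha>' \<or> \<beta>' \<le> \<alpha>"
      using separated unfolding J_def by fastforce
  qed
  ultimately show ?thesis using \<open>(\<Sum>(i, k)\<in>S. cell_incr i k) = _\<close> by simp
qed

end

end

section \<open>Riemann--Stieltjes sums\<close>

lemma (in lc_tvs) RS_sum_diff_cells:
  assumes P: "tagged_div a b n t s" and Q: "tagged_div a b m q \<sigma>"
  shows "RS_sum sm g x n t s - RS_sum sm g x m q \<sigma> =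
    (\<Sum>i<n. \<Sum>k<m. sm (g (s i) - g (\<sigma> k)) (cell_incr x t q i k))"
proof -
  have "RS_sum sm g x n t s = (\<Sum>i<n. \<Sum>k<m. sm (g (s i)) (cell_incr x t q i k))"
    unfolding RS_sum_def vs.scale_sum_right[symmetric]
    by (intro sum.cong refl) (simp add: sum_cell_incr_row[OF P Q])
  moreover have "RS_sum sm g x m q \<sigma> = (\<Sum>k<m. \<Sum>i<n. sm (g (\<sigma> k)) (cell_incr x t q i k))"
    unfolding RS_sum_def vs.scale_sum_right[symmetric]
    by (intro sum.cong refl) (simp add: sum_cell_incr_column[OF P Q])
  then have "RS_sum sm g x m q \<sigma> = (\<Sum>i<n. \<Sum>k<m. sm (g (\<sigma> k)) (cell_incr x t q i k))"
    by (simp add: sum.swap[of _ "{..<m}"])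
  ultimately show ?thesis by (simp add: sum_subtractf[symmetric] vs.scale_left_diff_distrib)
qed

definition RS_sums_close ::
  "(complex \<Rightarrow> 'x::ab_group_add \<Rightarrow> 'x) \<Rightarrow> (real \<Rightarrow> complex) \<Rightarrow> (real \<Rightarrow> 'x) \<Rightarrow> real \<Rightarrow> real \<Rightarrow> 'x set \<Rightarrow> bool"
  where "RS_sums_close sm g x a b U \<longleftrightarrow> (\<exists>\<delta>>0. \<forall>n t s m q \<sigma>.
    tagged_div a b n t s \<longrightarrow> mesh n t < \<delta> \<longrightarrow> tagged_div a b m q \<sigma> \<longrightarrow> mesh m q < \<delta> \<longrightarrow>
    RS_sum sm g x n t s - RS_sum sm g x m q \<sigma> \<in> U)"

context minkowski_nbhd
begin

context
  fixes x :: "real \<Rightarrow> 'x" and a b K :: real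
  assumes K: "0 \<le> K" "\<forall>e\<in>Eset x a b. minkowski e \<le> K"
begin

text \<open>Splitting the cells according to the sign of w on their increments gives two
  elements of E(a,b) \<union> {0}.\<close>

lemma sum_abs_cell_incr_le:
  assumes P: "tagged_div a b n t s" and Q: "tagged_div a b m q \<sigma>"
    and w: "rlinear w" "\<And>y. \<bar>w y\<bar> \<le> minkowski y"
  shows "(\<Sum>i<n. \<Sum>k<m. \<bar>w (cell_incr x t q i k)\<bar>) \<le> 2 * K"
proof -
  let ?D = "\<lambda>(i, k). cell_incr x t q i k"
  define I where "I = {..<n} \<times> {..<m}"
  define Sp where "Sp = {c\<in>I. w (?D c) \<ge> 0}"
  define Sn where "Sn = {c\<in>I. w (?D c) < 0}"
  have fin: "finite Sp" "finite Sn" unfolding I_def Sp_def Sn_def by simp_all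
  have le_K: "w (\<Sum>c\<in>S. ?D c) \<le> K" "- w (\<Sum>c\<in>S. ?D c) \<le> K" if "S \<subseteq> I" for S
  proof -
    have "(\<Sum>c\<in>S. ?D c) \<in> insert 0 (Eset x a b)"
      using sum_cell_incr_in_Eset[OF P Q] that unfolding I_def by (simp add: case_prod_beta')
    then have "minkowski (\<Sum>c\<in>S. ?D c) \<le> K" using K minkowski_zero by auto
    then show "w (\<Sum>c\<in>S. ?D c) \<le> K" "- w (\<Sum>c\<in>S. ?D c) \<le> K"
      using w(2)[of "\<Sum>c\<in>S. ?D c"] by linarith+
  qed
  have "(\<Sum>i<n. \<Sum>k<m. \<bar>w (cell_incr x t q i k)\<bar>) = (\<Sum>c\<in>I. \<bar>w (?D c)\<bar>)"
    unfolding I_def by (simp add: sum.cartesian_product split_def)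
  also have "\<dots> = (\<Sum>c\<in>Sp. \<bar>w (?D c)\<bar>) + (\<Sum>c\<in>Sn. \<bar>w (?D c)\<bar>)"
  proof -
    have "I = Sp \<union> Sn" "Sp \<inter> Sn = {}" unfolding Sp_def Sn_def by auto
    then show ?thesis using sum.union_disjoint[OF fin] by simp
  qed
  also have "(\<Sum>c\<in>Sp. \<bar>w (?D c)\<bar>) = w (\<Sum>c\<in>Sp. ?D c)"
    unfolding rlinear_sum[OF w(1)] Sp_def by (intro sum.cong) auto
  also have "(\<Sum>c\<in>Sn. \<bar>w (?D c)\<bar>) = - w (\<Sum>c\<in>Sn. ?D c)"
    unfolding rlinear_sum[OF w(1)] Sn_def by (simp add: sum_negf[symmetric])
  moreover have "Sp \<subseteq> I" "Sn \<subseteq> I" unfolding Sp_def Sn_def by auto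
  ultimately show ?thesis using le_K(1)[of Sp] le_K(2)[of Sn] by linarith
qed

lemma minkowski_weighted_cell_sum_le:
  assumes P: "tagged_div a b n t s" and Q: "tagged_div a b m q \<sigma>" and "0 \<le> \<epsilon>"
    and c: "\<And>i k. i < n \<Longrightarrow> k < m \<Longrightarrow> cell_incr x t q i k \<noteq> 0 \<Longrightarrow> cmod (c i k) \<le> \<epsilon>"
  shows "minkowski (\<Sum>i<n. \<Sum>k<m. sm (c i k) (cell_incr x t q i k)) \<le> 4 * \<epsilon> * K"
proof -
  let ?D = "cell_incr x t q"
  let ?Y = "\<Sum>i<n. \<Sum>k<m. sm (c i k) (?D i k)"
  obtain u where u: "rlinear u" "\<And>y. \<bar>u y\<bar> \<le> minkowski y" "u ?Y = minkowski ?Y"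
    using norming_rlinear[of ?Y] by blast
  define w where "w y = u (sm \<i> y)" for y
  have w: "rlinear w" "\<And>y. \<bar>w y\<bar> \<le> minkowski y"
    unfolding w_def using rlinear_rotate[OF u(1)] u(2)[of "sm \<i> _"] minkowski_rotate by simp_all
  have term_le: "u (sm (c i k) (?D i k)) \<le> \<epsilon> * \<bar>u (?D i k)\<bar> + \<epsilon> * \<bar>w (?D i k)\<bar>"
    if "i < n" "k < m" for i k
  proof (cases "?D i k = 0")
    case True
    then show ?thesis using rlinear_zero[OF u(1)] \<open>0 \<le> \<epsilon>\<close> by simp
  next
    case False
    then have "\<bar>Re (c i k)\<bar> \<le> \<epsilon>" "\<bar>Im (c i k)\<bar> \<le> \<epsilon>"
      using c[OF that] abs_Re_le_cmod[of "c i k"] abs_Im_le_cmod[of "c i k"] by linarith+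
    moreover have "u (sm (c i k) (?D i k)) = Re (c i k) * u (?D i k) + Im (c i k) * w (?D i k)"
      unfolding w_def scale_Re_Im[of "c i k"] using u(1) by (simp add: rlinear_add rlinear_rscale)
    moreover have "r * y \<le> \<epsilon> * \<bar>y\<bar>" if "\<bar>r\<bar> \<le> \<epsilon>" for r y :: real
      using mult_right_mono[OF that abs_ge_zero[of y]] abs_ge_self[of "r * y"] by (simp add: abs_mult)
    ultimately show ?thesis by (simp add: add_mono)
  qed
  have "minkowski ?Y = (\<Sum>i<n. \<Sum>k<m. u (sm (c i k) (?D i k)))"
    using u(3) by (simp add: rlinear_sum[OF u(1)])
  also have "\<dots> \<le> (\<Sum>i<n. \<Sum>k<m. \<epsilon> * \<bar>u (?D i k)\<bar> + \<epsilon> * \<bar>w (?D i k)\<bar>)"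
    using term_le by (intro sum_mono) auto
  also have "\<dots> = \<epsilon> * (\<Sum>i<n. \<Sum>k<m. \<bar>u (?D i k)\<bar>) + \<epsilon> * (\<Sum>i<n. \<Sum>k<m. \<bar>w (?D i k)\<bar>)"
    by (simp add: sum.distrib sum_distrib_left)
  also have "\<dots> \<le> \<epsilon> * (2 * K) + \<epsilon> * (2 * K)"
    using sum_abs_cell_incr_le[OF P Q u(1,2)] sum_abs_cell_incr_le[OF P Q w] \<open>0 \<le> \<epsilon>\<close>
    by (intro add_mono mult_left_mono) auto
  finally show ?thesis by (simp add: algebra_simps)
qed

lemma RS_sums_close_minkowski:
  assumes "continuous_on {a..b} g"
  shows "RS_sums_close sm g x a b {y. minkowski y < 1}"
proof -
  define \<epsilon> where "\<epsilon> = 1 / (4 * (K + 1))"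
  have "\<epsilon> > 0" unfolding \<epsilon>_def using K by simp
  moreover have "uniformly_continuous_on {a..b} g"
    by (rule compact_uniformly_continuous[OF assms compact_Icc])
  ultimately obtain d where "d > 0"
    and d: "\<forall>s\<in>{a..b}. \<forall>s'\<in>{a..b}. dist s' s < d \<longrightarrow> dist (g s') (g s) < \<epsilon>"
    unfolding uniformly_continuous_on_def by blast
  have "minkowski (RS_sum sm g x n t s - RS_sum sm g x m q \<sigma>) < 1"
    if P: "tagged_div a b n t s" "mesh n t < d/2" and Q: "tagged_div a b m q \<sigma>" "mesh m q < d/2"
    for n t s m q \<sigma>
  proof -
    have "cmod (g (s i) - g (\<sigma> k)) \<le> \<epsilon>"
      if "i < n" "k < m" "cell_incr x t q i k \<noteq> 0" for i k
    proof -
      have "\<bar>s i - \<sigma> k\<bar> < d" using cell_tags_close[OF P(1) Q(1) that P(2) Q(2)] by simp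
      moreover have "s i \<in> {a..b}" "\<sigma> k \<in> {a..b}"
        using tagged_div_tag[OF P(1) \<open>i < n\<close>] tagged_div_tag[OF Q(1) \<open>k < m\<close>]
          tagged_div_range[OF P(1), of i] tagged_div_range[OF P(1), of "Suc i"]
          tagged_div_range[OF Q(1), of k] tagged_div_range[OF Q(1), of "Suc k"] that(1,2)
        by auto
      ultimately have "dist (g (s i)) (g (\<sigma> k)) < \<epsilon>" using d by (simp add: dist_real_def)
      then show ?thesis by (simp add: dist_norm)
    qed
    then have "minkowski (RS_sum sm g x n t s - RS_sum sm g x m q \<sigma>) \<le> 4 * \<epsilon> * K"
      unfolding RS_sum_diff_cells[OF P(1) Q(1)] using \<open>\<epsilon> > 0\<close>
      by (intro minkowski_weighted_cell_sum_le[OF P(1) Q(1)]) auto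
    also have "4 * \<epsilon> * K < 1" unfolding \<epsilon>_def using K by (simp add: field_simps)
    finally show ?thesis .
  qed
  then show ?thesis unfolding RS_sums_close_def using \<open>d > 0\<close> by (intro exI[of _ "d/2"]) auto
qed

end

end

lemma RS_sums_closeE:
  assumes "RS_sums_close sm g x a b U"
  obtains \<delta> where "\<delta> > 0" "\<And>n t s m q \<sigma>. tagged_div a b n t s \<Longrightarrow> mesh n t < \<delta> \<Longrightarrow>
    tagged_div a b m q \<sigma> \<Longrightarrow> mesh m q < \<delta> \<Longrightarrow> RS_sum sm g x n t s - RS_sum sm g x m q \<sigma> \<in> U"
  using assms unfolding RS_sums_close_def by blast

lemma RS_sums_close_mono: "RS_sums_close sm g x a b U \<Longrightarrow> U \<subseteq> W \<Longrightarrow> RS_sums_close sm g x a b W"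
  unfolding RS_sums_close_def by blast

context lc_tvs
begin

lemma RS_sums_close_weakly_compact:
  assumes "weakly_compact_semivariation sm x a b" "continuous_on {a..b} g" "open U" "0 \<in> U"
  shows "RS_sums_close sm g x a b U"
proof -
  obtain V where V: "open V" "0 \<in> V" "V \<subseteq> U" "cconvex sm V" "\<forall>v\<in>V. sm \<i> v \<in> V"
    using convex_rotation_invariant_nbhd[OF assms(3,4)] by blast
  interpret minkowski_nbhd sm V
    using V by unfold_locales auto
  obtain K where "\<forall>e\<in>Eset x a b. minkowski e \<le> K"
    using weakly_compact_closure_imp_minkowski_bounded assms(1)
    unfolding weakly_compact_semivariation_def by blast
  then have "\<forall>e\<in>Eset x a b. minkowski e \<le> max K 0" by (meson max.coboundedI1)
  then have "RS_sums_close sm g x a b {y. minkowski y < 1}"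
    using RS_sums_close_minkowski[of "max K 0" x a b g] assms(2) by simp
  moreover have "{y. minkowski y < 1} \<subseteq> U" using minkowski_lt_1_imp_mem V(3) by blast
  ultimately show ?thesis by (rule RS_sums_close_mono)
qed

end

definition uniform_div :: "real \<Rightarrow> real \<Rightarrow> nat \<Rightarrow> nat \<Rightarrow> real" where
  "uniform_div a b j i = a + real i * (b - a) / real (Suc j)"

lemma tagged_div_uniform_div:
  assumes "a \<le> b" shows "tagged_div a b (Suc j) (uniform_div a b j) (uniform_div a b j)"
proof -
  have "uniform_div a b j i \<le> uniform_div a b j (Suc i)" for i
    using assms unfolding uniform_div_def by (simp add: divide_right_mono mult_right_mono)
  then show ?thesis unfolding tagged_div_def uniform_div_def by (simp del: of_nat_Suc)
qed

lemma eventually_mesh_uniform_div_less: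
  assumes "a \<le> b" "0 < \<delta>"
  shows "eventually (\<lambda>j. mesh (Suc j) (uniform_div a b j) < \<delta>) sequentially"
proof -
  have mesh_le: "mesh (Suc j) (uniform_div a b j) \<le> (b - a) / real (Suc j)" for j
    using assms(1) by (intro mesh_le) (simp_all add: uniform_div_def add_divide_distrib distrib_right)
  obtain N :: nat where N: "(b - a) / \<delta> < real N" using reals_Archimedean2 by blast
  have "(b - a) / real (Suc j) < \<delta>" if "N \<le> j" for j
  proof -
    have "(b - a) / \<delta> < real (Suc j)" using N that by simp
    then show ?thesis using assms(2) by (simp add: field_simps)
  qed
  then show ?thesis unfolding eventually_sequentially using mesh_le order.strict_trans1 by blast
qed

context lc_tvs
begin

lemma tvs_cauchy_uniform_RS_sums:
  assumes "a \<le> b" and close: "\<And>U. open U \<Longrightarrow> 0 \<in> U \<Longrightarrow> RS_sums_close sm g x a b U"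
  shows "tvs_cauchy (\<lambda>j. RS_sum sm g x (Suc j) (uniform_div a b j) (uniform_div a b j))"
  unfolding tvs_cauchy_def
proof (intro allI impI)
  fix U :: "'x set" assume "open U \<and> 0 \<in> U"
  then have "RS_sums_close sm g x a b U" using close by blast
  then obtain \<delta> where "\<delta> > 0" and \<delta>: "\<And>n t s m q \<sigma>. tagged_div a b n t s \<Longrightarrow> mesh n t < \<delta> \<Longrightarrow>
      tagged_div a b m q \<sigma> \<Longrightarrow> mesh m q < \<delta> \<Longrightarrow> RS_sum sm g x n t s - RS_sum sm g x m q \<sigma> \<in> U"
    by (rule RS_sums_closeE) blast
  obtain N where N: "\<And>j. N \<le> j \<Longrightarrow> mesh (Suc j) (uniform_div a b j) < \<delta>"
    using eventually_mesh_uniform_div_less[OF assms(1) \<open>\<delta> > 0\<close>] unfolding eventually_sequentially by blast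
  show "\<exists>N. \<forall>j\<ge>N. \<forall>j'\<ge>N. RS_sum sm g x (Suc j) (uniform_div a b j) (uniform_div a b j)
      - RS_sum sm g x (Suc j') (uniform_div a b j') (uniform_div a b j') \<in> U"
    using \<delta>[OF tagged_div_uniform_div[OF assms(1)] N tagged_div_uniform_div[OF assms(1)] N] by blast
qed

lemma has_RS_integral_if_RS_sums_close:
  assumes complete: "seq_complete_tvs TYPE('x)" and "a \<le> b"
    and close: "\<And>U. open U \<Longrightarrow> 0 \<in> U \<Longrightarrow> RS_sums_close sm g x a b U"
  shows "\<exists>I. has_RS_integral sm g x a b I"
proof -
  define R where "R j = RS_sum sm g x (Suc j) (uniform_div a b j) (uniform_div a b j)" for j
  obtain I where I: "R \<longlonglongrightarrow> I"
    using complete tvs_cauchy_uniform_RS_sums[OF assms(2) close] unfolding seq_complete_tvs_def R_def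
    by blast
  have "\<exists>\<delta>>0. \<forall>n t s. tagged_div a b n t s \<and> mesh n t < \<delta> \<longrightarrow> RS_sum sm g x n t s \<in> U"
    if "open U" "I \<in> U" for U
  proof -
    define U0 where "U0 = (\<lambda>y. y + I) -` U"
    have "open U0" "0 \<in> U0"
      unfolding U0_def using that open_vimage_continuous[OF continuous_translate[of I]] by simp_all
    then obtain W where W: "open W" "0 \<in> W" "\<forall>w1\<in>W. \<forall>w2\<in>W. w1 + w2 \<in> U0"
      using zero_nbhd_sum by blast
    obtain \<delta> where "\<delta> > 0" and \<delta>: "\<And>n t s m q \<sigma>. tagged_div a b n t s \<Longrightarrow> mesh n t < \<delta> \<Longrightarrow>
        tagged_div a b m q \<sigma> \<Longrightarrow> mesh m q < \<delta> \<Longrightarrow> RS_sum sm g x n t s - RS_sum sm g x m q \<sigma> \<in> W"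
      using RS_sums_closeE[OF close[OF W(1,2)]] by blast
    have "open ((\<lambda>y. y - I) -` W)" "I \<in> (\<lambda>y. y - I) -` W"
      using W(2) open_vimage_continuous[OF continuous_translate[of "- I"] W(1)] by simp_all
    then have "eventually (\<lambda>j. R j \<in> (\<lambda>y. y - I) -` W) sequentially"
      by (rule topological_tendstoD[OF I])
    then have "eventually (\<lambda>j. R j - I \<in> W \<and> mesh (Suc j) (uniform_div a b j) < \<delta>) sequentially"
      using eventually_mesh_uniform_div_less[OF assms(2) \<open>\<delta> > 0\<close>] by (simp add: eventually_conj)
    then obtain j where j: "R j - I \<in> W" "mesh (Suc j) (uniform_div a b j) < \<delta>"
      using eventually_happens'[OF sequentially_bot] by blast
    have "RS_sum sm g x n t s \<in> U" if "tagged_div a b n t s" "mesh n t < \<delta>" for n t s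
    proof -
      have "RS_sum sm g x n t s - R j \<in> W"
        unfolding R_def using \<delta>[OF that tagged_div_uniform_div[OF assms(2)] j(2)] .
      then have "(RS_sum sm g x n t s - R j) + (R j - I) \<in> U0" using W(3) j(1) by blast
      then show ?thesis unfolding U0_def by simp
    qed
    then show ?thesis using \<open>\<delta> > 0\<close> by blast
  qed
  then show ?thesis unfolding has_RS_integral_def by blast
qed

end

theorem corollary1:
  fixes sm :: "complex \<Rightarrow> 'x::{ab_group_add,t2_space} \<Rightarrow> 'x"
    and x :: "real \<Rightarrow> 'x" and a b :: real
  assumes "complex_tvs sm"
    and "locally_convex sm"
    and "seq_complete_tvs TYPE('x)"
    and "a \<le> b"
    and "weakly_compact_semivariation sm x a b"
  shows "\<forall>g::real \<Rightarrow> complex. continuous_on {a..b} g \<longrightarrow> (\<exists>I. has_RS_integral sm g x a b I)"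
proof (intro allI impI)
  fix g :: "real \<Rightarrow> complex" assume g: "continuous_on {a..b} g"
  interpret lc_tvs sm by (rule lc_tvs.intro) fact+
  show "\<exists>I. has_RS_integral sm g x a b I"
    using has_RS_integral_if_RS_sums_close[OF assms(3,4)] RS_sums_close_weakly_compact[OF assms(5) g]
    by blast
qed

end
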